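(* Let $A$ be the symmetric adjacency matrix of an undirected random graph on $n$ nodes with $A_{ii}=0$ and $\{A_{ij}\}_{i<j}$ independent with $A_{ij}\sim\mathrm{Bernoulli}(P_{ij})$, where $P$ is a symmetric probability matrix. Let $\delta^{(1)},\dots,\delta^{(M)}$ be a nested sequence of network models (with sets of allowed probability matrices $\mathcal P^{(1)}\subset\cdots\subset\mathcal P^{(M)}$) and let $m^*\in[M]$ be the true model index, i.e. $P\in\mathcal P^{(m^* )}$ but $P\notin\mathcal P^{(m')}$ for all $m'<m^*$. Fix a training proportion $w_n\in(0,1)$ and form a random training edge set $\mathcal E$ by placing each pair $(i,j)$, $i<j$, in $\mathcal E$ independently with probability $w_n$ (independently of $A$; $(j,i)$ is assigned with $(i,j)$), with $\mathcal E^c$ the complementary evaluation set of off-diagonal pairs. For each $m\in[M]$ let $\widehat P^{(m)}$ be an estimator of $P$ computed from the training entries only, and define $$L_m(A,\mathcal E^c)=\frac{1}{|\mathcal E^c|}\sum_{(i,j)\in\mathcal E^c}\big(A_{ij}-\widehat P^{(m)}_{ij}\big)^2+d_m\lambda_n,\qquad \widehat m=\arg\min_{m\in[M]}L_m(A,\mathcal E^c),$$ where $d_1<d_2<\dots<d_M$ is an increasing sequence of model complexities and $\lambda_n>0$ is a (deterministic or random) penalty. Assume: (1) for every $m'\ge m^*$, $\frac{1}{n^2}\|\widehat P^{(m')}-P\|_F^2=O_{\mathbb P}(a_{n,w,m'})$ for some $a_{n,w,m'}=o(1)$; (2) for every $m'<m^*$, $\frac{1}{|\mathcal E^c|}\sum_{(i,j)\in\mathcal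 E^c}(\widehat P^{(m')}_{ij}-P_{ij})^2=\Omega_{\mathbb P}(b_{n,w,m'})$ for some $b_{n,w,m'}>0$; (3) with $a_{n,w}:=\max_{m'\ge m^*}a_{n,w,m'}$ and $b_{n,w}:=\min_{m'<m^*}b_{n,w,m'}$, we have $(1-w_n)b_{n,w}\big/\max\{\sqrt{a_{n,w}(1-w_n)\|P\|_\infty},\,a_{n,w}\}=\omega(1)$ and $n^2(1-w_n)b_{n,w}=\omega(1)$. If $\max\{\sqrt{a_{n,w}(1-w_n)\|P\|_\infty},\,a_{n,w}\}\ll(1-w_n)\lambda_n\ll(1-w_n)b_{n,w}$, then $\mathbb P(\widehat m=m^* )\to1$ as $n\to\infty$.
   Context: A list of network models $\delta^{(\ell)}$, $\ell\in[M]$, is nested if $\mathcal P^{(\ell)}\subset\mathcal P^{(\ell')}$ for $\ell<\ell'$, where $\mathcal P^{(\ell)}$ is the set of probability matrices allowed under $\delta^{(\ell)}$. $\|M\|_F$ is the Frobenius norm and $\|M\|_\infty=\max_{ij}|M_{ij}|$; $\|P\|_\infty$ may tend to $0$. $x_n\ll y_n$ means $x_n/y_n\to0$ (in probability when random). $O_{\mathbb P},\Omega_{\mathbb P}$ denote stochastic upper/lower order bounds; $\omega(1)$ means tending to infinity. *)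

theory Defs
  imports "HOL-Probability.Probability"
begin

text \<open>Sample outcome: for each unordered pair (i,j) with i<j (encoded as the ordered
pair with i<j) a pair (edge present in A, pair placed in the training set E).\<close>
type_synonym outcome = "nat \<times> nat \<Rightarrow> bool \<times> bool"

definition pairs :: "nat \<Rightarrow> (nat \<times> nat) set" where
  "pairs n = {(i,j). i < j \<and> j < n}"

definition sample_pmf :: "nat \<Rightarrow> (nat \<Rightarrow> nat \<Rightarrow> real) \<Rightarrow> real \<Rightarrow> outcome pmf" where
  "sample_pmf n P w = Pi_pmf (pairs n) (False, False)
      (\<lambda>(i,j). pair_pmf (bernoulli_pmf (P i j)) (bernoulli_pmf w))"

definition adj :: "outcome \<Rightarrow> nat \<Rightarrow> nat \<Rightarrow> real" where
  "adj \<omega> i j = (if i < j then (if fst (\<omega> (i,j)) then 1 else 0)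
                 else if j < i then (if fst (\<omega> (j,i)) then 1 else 0) else 0)"

definition in_train :: "outcome \<Rightarrow> nat \<Rightarrow> nat \<Rightarrow> bool" where
  "in_train \<omega> i j = (i \<noteq> j \<and> snd (\<omega> (min i j, max i j)))"

definition eval_set :: "nat \<Rightarrow> outcome \<Rightarrow> (nat \<times> nat) set" where
  "eval_set n \<omega> = {(i,j). i < n \<and> j < n \<and> i \<noteq> j \<and> \<not> in_train \<omega> i j}"

text \<open>An estimator uses only training entries (the set E and A restricted to E).\<close>
definition training_only :: "nat \<Rightarrow> (outcome \<Rightarrow> nat \<Rightarrow> nat \<Rightarrow> real) \<Rightarrow> bool" where
  "training_only n Ph \<longleftrightarrow> (\<forall>\<omega> \<omega>'. (\<forall>p\<in>pairs n. snd (\<omega> p) = snd (\<omega>' p) \<and>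
        (snd (\<omega> p) \<longrightarrow> fst (\<omega> p) = fst (\<omega>' p))) \<longrightarrow> Ph \<omega> = Ph \<omega>')"

definition sup_norm :: "nat \<Rightarrow> (nat \<Rightarrow> nat \<Rightarrow> real) \<Rightarrow> real" where
  "sup_norm n P = Max (insert 0 {\<bar>P i j\<bar> | i j. i < n \<and> j < n})"

definition frob_sq :: "nat \<Rightarrow> (nat \<Rightarrow> nat \<Rightarrow> real) \<Rightarrow> real" where
  "frob_sq n M = (\<Sum>i<n. \<Sum>j<n. (M i j)\<^sup>2)"

definition bigO_P :: "(nat \<Rightarrow> 'a pmf) \<Rightarrow> (nat \<Rightarrow> 'a \<Rightarrow> real) \<Rightarrow> (nat \<Rightarrow> real) \<Rightarrow> bool" where
  "bigO_P \<Omega> X a \<longleftrightarrow> (\<forall>\<epsilon>>0. \<exists>C. \<exists>N. \<forall>n\<ge>N.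
      measure_pmf.prob (\<Omega> n) {\<omega>. \<bar>X n \<omega>\<bar> > C * a n} \<le> \<epsilon>)"

definition bigOmega_P :: "(nat \<Rightarrow> 'a pmf) \<Rightarrow> (nat \<Rightarrow> 'a \<Rightarrow> real) \<Rightarrow> (nat \<Rightarrow> real) \<Rightarrow> bool" where
  "bigOmega_P \<Omega> X b \<longleftrightarrow> (\<forall>\<epsilon>>0. \<exists>c>0. \<exists>N. \<forall>n\<ge>N.
      measure_pmf.prob (\<Omega> n) {\<omega>. \<bar>X n \<omega>\<bar> < c * b n} \<le> \<epsilon>)"

definition ll_P :: "(nat \<Rightarrow> 'a pmf) \<Rightarrow> (nat \<Rightarrow> 'a \<Rightarrow> real) \<Rightarrow> (nat \<Rightarrow> 'a \<Rightarrow> real) \<Rightarrow> bool" where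
  "ll_P \<Omega> X Y \<longleftrightarrow> (\<forall>\<epsilon>>0. (\<lambda>n. measure_pmf.prob (\<Omega> n) {\<omega>. \<bar>X n \<omega> / Y n \<omega>\<bar> > \<epsilon>})
      \<longlonglongrightarrow> 0)"

definition cv_loss :: "nat \<Rightarrow> (outcome \<Rightarrow> nat \<Rightarrow> nat \<Rightarrow> real) \<Rightarrow> real \<Rightarrow> real \<Rightarrow> outcome \<Rightarrow> real" where
  "cv_loss n Ph dm lam \<omega> =
     (1 / real (card (eval_set n \<omega>))) *
       (\<Sum>(i,j)\<in>eval_set n \<omega>. (adj \<omega> i j - Ph \<omega> i j)\<^sup>2) + dm * lam"

definition argmin_set :: "nat \<Rightarrow> (nat \<Rightarrow> real) \<Rightarrow> nat set" where
  "argmin_set M L = {m \<in> {1..M}. \<forall>m'\<in>{1..M}. L m \<le> L m'}"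

end

theory Submission
  imports Defs
begin

text \<open>
  Let k be the number of evaluation pairs. The loss of model m is R/k - 2 c_m + e_m + d_m lam,
  where e_m is the mean squared error of the m-th estimate on the evaluation pairs, c_m is the
  mean of (A - P)(Phat_m - P) over them, and R does not depend on m. The estimators see only
  training entries, so conditionally on the training data c_m is a sum of independent centred
  edge terms, and Chebyshev's inequality gives c_m^2 <= (2 ||P||_inf / eps) e_m / k outside an
  event of probability eps. As k concentrates around (1 - w) n^2, for m >= mstar both e_m and
  |c_m| are at most a constant times max (sqrt (a (1 - w) ||P||_inf)) a / (1 - w), which is
  negligible against lam, so every larger model pays the penalty gap (d_m - d_mstar) lam in
  full. For m < mstar the error e_m >= c b dominates the penalty gap, the noise of the true
  model and |c_m|. For each eps all these estimates hold simultaneously with probability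
  1 - O(eps) once n is large.
\<close>

section \<open>Products of finitely supported PMFs\<close>

lemma finite_set_pmf_Pi_pmf:
  assumes "finite I" "\<And>i. finite (set_pmf (D i))"
  shows "finite (set_pmf (Pi_pmf I dflt D))"
  using assms by (subst set_Pi_pmf) (auto intro!: finite_PiE_dflt)

lemma integral_pair_pmf_finite:
  fixes u :: "'a \<times> 'b \<Rightarrow> real"
  assumes fX: "finite (set_pmf X)" and fY: "finite (set_pmf Y)"
  shows "(\<integral>z. u z \<partial>pair_pmf X Y) = (\<integral>x. (\<integral>y. u (x,y) \<partial>Y) \<partial>X)"
proof -
  have "(\<integral>z. u z \<partial>pair_pmf X Y) = (\<Sum>z\<in>set_pmf X \<times> set_pmf Y. u z * pmf (pair_pmf X Y) z)"
    by (rule integral_measure_pmf_real) (use assms in auto)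
  also have "\<dots> = (\<Sum>x\<in>set_pmf X. \<Sum>y\<in>set_pmf Y. u (x,y) * (pmf X x * pmf Y y))"
    by (subst sum.cartesian_product) (auto intro!: sum.cong simp: pmf_pair)
  also have "\<dots> = (\<Sum>x\<in>set_pmf X. (\<Sum>y\<in>set_pmf Y. u (x,y) * pmf Y y) * pmf X x)"
    by (auto simp: sum_distrib_left sum_distrib_right mult_ac intro!: sum.cong)
  also have "\<dots> = (\<Sum>x\<in>set_pmf X. (\<integral>y. u (x,y) \<partial>Y) * pmf X x)"
    by (intro sum.cong refl) (subst integral_measure_pmf_real[of "set_pmf Y"], use fY in auto)
  also have "\<dots> = (\<integral>x. (\<integral>y. u (x,y) \<partial>Y) \<partial>X)"
    by (rule integral_measure_pmf_real[symmetric]) (use fX in auto)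
  finally show ?thesis .
qed

lemma expectation_Pi_pmf_resample:
  fixes H :: "('k \<Rightarrow> 'v) \<Rightarrow> real"
  assumes fin: "finite I" and p: "p \<in> I" and finD: "\<And>i. finite (set_pmf (D i))"
  shows "measure_pmf.expectation (Pi_pmf I dflt D) H =
         measure_pmf.expectation (D p)
           (\<lambda>y. measure_pmf.expectation (Pi_pmf I dflt D) (\<lambda>f. H (f(p := y))))"
proof -
  have "Pi_pmf I dflt D = Pi_pmf (insert p (I - {p})) dflt D"
    using p by (simp add: insert_absorb)
  also have "\<dots> = map_pmf (\<lambda>(y,f). f(p := y)) (pair_pmf (D p) (Pi_pmf (I - {p}) dflt D))"
    by (rule Pi_pmf_insert) (use fin in auto)
  finally have "measure_pmf.expectation (Pi_pmf I dflt D) H =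
      (\<integral>y. (\<integral>f. H (f(p := y)) \<partial>Pi_pmf (I - {p}) dflt D) \<partial>D p)"
    by (simp add: case_prod_beta integral_pair_pmf_finite finD finite_set_pmf_Pi_pmf fin)
  also have "\<dots> = (\<integral>y. (\<integral>f. H ((f(p := dflt))(p := y)) \<partial>Pi_pmf I dflt D) \<partial>D p)"
    by (simp add: Pi_pmf_remove[OF fin])
  finally show ?thesis by simp
qed

lemma expectation_Pi_pmf_mult_indep:
  fixes F :: "('k \<Rightarrow> 'v) \<Rightarrow> real" and g :: "'v \<Rightarrow> real"
  assumes "finite I" "p \<in> I" "\<And>i. finite (set_pmf (D i))"
    and "\<And>f y. F (f(p := y)) = F f"
  shows "measure_pmf.expectation (Pi_pmf I dflt D) (\<lambda>f. g (f p) * F f) =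
         measure_pmf.expectation (D p) g * measure_pmf.expectation (Pi_pmf I dflt D) F"
  by (subst expectation_Pi_pmf_resample[OF assms(1-3)]) (simp add: assms(4))

lemma expectation_Pi_pmf_mult_indep_fst:
  fixes F :: "('k \<Rightarrow> 'a \<times> 'b) \<Rightarrow> real" and g :: "'a \<Rightarrow> real"
  assumes fin: "finite I" and p: "p \<in> I" and finD: "\<And>i. finite (set_pmf (D i))"
    and Dp: "D p = pair_pmf X Y"
    and inv: "\<And>f a. F (f(p := (a, snd (f p)))) = F f"
  shows "measure_pmf.expectation (Pi_pmf I dflt D) (\<lambda>f. g (fst (f p)) * F f) =
         measure_pmf.expectation X g * measure_pmf.expectation (Pi_pmf I dflt D) F"
proof -
  define J where
    "J = (\<lambda>e. measure_pmf.expectation (Pi_pmf I dflt D) (\<lambda>f. F (f(p := (undefined, e)))))"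
  have J: "measure_pmf.expectation (Pi_pmf I dflt D) (\<lambda>f. F (f(p := y))) = J (snd y)" for y
    unfolding J_def by (metis fun_upd_same fun_upd_upd inv)
  have finXY: "finite (set_pmf X)" "finite (set_pmf Y)"
    using finD[of p] finite_cartesian_productD1[OF _ set_pmf_not_empty]
      finite_cartesian_productD2[OF _ set_pmf_not_empty] unfolding Dp by auto
  have "measure_pmf.expectation (Pi_pmf I dflt D) (\<lambda>f. g (fst (f p)) * F f) =
        (\<integral>x. (\<integral>e. g x * J e \<partial>Y) \<partial>X)"
    by (subst expectation_Pi_pmf_resample[OF fin p finD])
       (simp add: J Dp integral_pair_pmf_finite[OF finXY])
  also have "\<dots> = measure_pmf.expectation X g * measure_pmf.expectation Y J"
    by (simp add: mult.commute)
  also have "measure_pmf.expectation Y J = measure_pmf.expectation (Pi_pmf I dflt D) F"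
    by (subst expectation_Pi_pmf_resample[OF fin p finD]) (simp add: J Dp)
  finally show ?thesis .
qed

lemma expectation_sq_sum_orthogonal:
  fixes Y :: "'k \<Rightarrow> 'a \<Rightarrow> real" and \<phi> :: "'a \<Rightarrow> real"
  assumes S: "finite S" and fin: "finite (set_pmf Q)"
    and orth: "\<And>p q. p \<in> S \<Longrightarrow> q \<in> S \<Longrightarrow> p \<noteq> q \<Longrightarrow>
                 measure_pmf.expectation Q (\<lambda>x. Y p x * Y q x * \<phi> x) = 0"
  shows "measure_pmf.expectation Q (\<lambda>x. (\<Sum>p\<in>S. Y p x)\<^sup>2 * \<phi> x) =
         (\<Sum>p\<in>S. measure_pmf.expectation Q (\<lambda>x. (Y p x)\<^sup>2 * \<phi> x))"
proof -
  have diag: "(\<Sum>q\<in>S. measure_pmf.expectation Q (\<lambda>x. Y p x * Y q x * \<phi> x)) =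
              measure_pmf.expectation Q (\<lambda>x. (Y p x)\<^sup>2 * \<phi> x)" if p: "p \<in> S" for p
    using orth p by (subst sum.remove[OF S p]) (auto intro!: sum.neutral simp: power2_eq_square)
  have "(\<lambda>x. (\<Sum>p\<in>S. Y p x)\<^sup>2 * \<phi> x) = (\<lambda>x. \<Sum>p\<in>S. \<Sum>q\<in>S. Y p x * Y q x * \<phi> x)"
    by (simp only: power2_eq_square sum_product) (simp add: sum_distrib_right)
  hence "measure_pmf.expectation Q (\<lambda>x. (\<Sum>p\<in>S. Y p x)\<^sup>2 * \<phi> x) =
         (\<Sum>p\<in>S. \<Sum>q\<in>S. measure_pmf.expectation Q (\<lambda>x. Y p x * Y q x * \<phi> x))"
    by (simp add: Bochner_Integration.integral_sum integrable_measure_pmf_finite[OF fin])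
  also have "\<dots> = (\<Sum>p\<in>S. measure_pmf.expectation Q (\<lambda>x. (Y p x)\<^sup>2 * \<phi> x))"
    by (rule sum.cong[OF refl diag])
  finally show ?thesis .
qed

lemma prob_less_le_of_expectation_le:
  fixes u :: "'a \<Rightarrow> real"
  assumes fin: "finite (set_pmf Q)" and u: "\<And>x. 0 \<le> u x" and t: "0 \<le> t" and eps: "0 \<le> eps"
    and E: "measure_pmf.expectation Q u \<le> t * eps"
  shows "measure_pmf.prob Q {x. t < u x} \<le> eps"
proof (cases "t = 0")
  case True
  have "measure_pmf.expectation Q u = 0"
    using E True u by (simp add: dual_order.antisym)
  hence "\<forall>x\<in>set_pmf Q. u x = 0"
    using integral_nonneg_eq_0_iff_AE[OF integrable_measure_pmf_finite[OF fin], of u] u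
    by (simp add: AE_measure_pmf_iff)
  hence "measure_pmf.prob Q {x. t < u x} = 0"
    using True by (auto simp: measure_pmf_zero_iff)
  thus ?thesis using eps by simp
next
  case False
  have "measure_pmf.prob Q {x. t < u x} \<le> measure_pmf.prob Q {x. t \<le> u x}"
    by (intro measure_pmf.finite_measure_mono) auto
  also have "\<dots> \<le> measure_pmf.expectation Q u / t"
    using integral_Markov_inequality_measure[where M = "measure_pmf Q" and u = u and A = UNIV and c = t]
      integrable_measure_pmf_finite[OF fin] u t False
    by auto
  also have "\<dots> \<le> eps"
    using E t False by (simp add: divide_le_eq mult.commute)
  finally show ?thesis .
qed

section \<open>The sampling model\<close>

lemma finite_pairs: "finite (pairs n)"
  by (rule finite_subset[of _ "{..<n} \<times> {..<n}"]) (auto simp: pairs_def)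

lemma card_pairs: "real (card (pairs n)) = real n * (real n - 1) / 2"
proof -
  have "pairs n = (\<lambda>(j,i). (i,j)) ` (SIGMA j:{..<n}. {..<j})"
    by (auto simp: pairs_def image_iff)
  moreover have "inj_on (\<lambda>(j::nat, i::nat). (i,j)) (SIGMA j:{..<n}. {..<j})"
    by (auto simp: inj_on_def)
  ultimately have "card (pairs n) = (\<Sum>j<n. j)"
    by (simp add: card_image card_SigmaI)
  hence "real (card (pairs n)) = (\<Sum>j<n. real j)" by simp
  also have "\<dots> = real n * (real n - 1) / 2"
    by (induction n) (auto simp: field_simps)
  finally show ?thesis .
qed

lemma finite_set_pmf_sample: "finite (set_pmf (sample_pmf n P w))"
  unfolding sample_pmf_def
  by (rule finite_set_pmf_Pi_pmf[OF finite_pairs]) (rule finite_subset[of _ UNIV], auto)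

lemma integrable_sample: "integrable (measure_pmf (sample_pmf n P w)) (f :: outcome \<Rightarrow> real)"
  by (rule integrable_measure_pmf_finite[OF finite_set_pmf_sample])

lemma expectation_sample_mult_indep:
  fixes F :: "outcome \<Rightarrow> real" and g :: "bool \<times> bool \<Rightarrow> real"
  assumes "(i,j) \<in> pairs n" and "\<And>x y. F (x((i,j) := y)) = F x"
  shows "measure_pmf.expectation (sample_pmf n P w) (\<lambda>x. g (x (i,j)) * F x) =
         measure_pmf.expectation (pair_pmf (bernoulli_pmf (P i j)) (bernoulli_pmf w)) g *
         measure_pmf.expectation (sample_pmf n P w) F"
  unfolding sample_pmf_def using assms
  by (subst expectation_Pi_pmf_mult_indep[OF finite_pairs]) (auto intro: finite_subset[of _ UNIV])

lemma expectation_sample_mult_indep_edge: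
  fixes F :: "outcome \<Rightarrow> real" and g :: "bool \<Rightarrow> real"
  assumes "(i,j) \<in> pairs n" and "\<And>x e. F (x((i,j) := (e, snd (x (i,j))))) = F x"
  shows "measure_pmf.expectation (sample_pmf n P w) (\<lambda>x. g (fst (x (i,j))) * F x) =
         measure_pmf.expectation (bernoulli_pmf (P i j)) g *
         measure_pmf.expectation (sample_pmf n P w) F"
  unfolding sample_pmf_def using assms
  by (subst expectation_Pi_pmf_mult_indep_fst[OF finite_pairs, where Y = "bernoulli_pmf w"])
     (auto intro: finite_subset[of _ UNIV])

lemma sum_eval_set:
  fixes f :: "nat \<Rightarrow> nat \<Rightarrow> real"
  shows "(\<Sum>(i,j)\<in>eval_set n x. f i j) =
         (\<Sum>(i,j)\<in>pairs n. if snd (x (i,j)) then 0 else f i j + f j i)"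
proof -
  define S where "S = {p\<in>pairs n. \<not> snd (x p)}"
  have finS: "finite S"
    unfolding S_def using finite_pairs by simp
  have split: "eval_set n x = S \<union> prod.swap ` S"
    unfolding S_def eval_set_def pairs_def in_train_def
    by (auto simp: image_iff min_def max_def split: if_splits)
  have "(\<Sum>(i,j)\<in>eval_set n x. f i j) = (\<Sum>(i,j)\<in>S. f i j) + (\<Sum>(i,j)\<in>prod.swap ` S. f i j)"
    unfolding split
    by (rule sum.union_disjoint) (auto simp: finS, auto simp: S_def pairs_def)
  also have "(\<Sum>(i,j)\<in>prod.swap ` S. f i j) = (\<Sum>(i,j)\<in>S. f j i)"
    by (subst sum.reindex) (auto simp: case_prod_beta)
  also have "(\<Sum>(i,j)\<in>S. f i j) + (\<Sum>(i,j)\<in>S. f j i) =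
             (\<Sum>(i,j)\<in>pairs n. if snd (x (i,j)) then 0 else f i j + f j i)"
    unfolding S_def using finite_pairs[of n]
    by (simp add: sum.distrib[symmetric] sum.inter_filter case_prod_beta if_distrib)
       (auto intro!: sum.cong)
  finally show ?thesis .
qed

definition eval_pair_count :: "nat \<Rightarrow> outcome \<Rightarrow> nat" where
  "eval_pair_count n x = card {p\<in>pairs n. \<not> snd (x p)}"

lemma eval_pair_count_eq_sum:
  "real (eval_pair_count n x) = (\<Sum>p\<in>pairs n. if snd (x p) then 0 else 1)"
proof -
  have "real (eval_pair_count n x) = (\<Sum>p\<in>{p\<in>pairs n. \<not> snd (x p)}. 1)"
    by (simp add: eval_pair_count_def)
  also have "\<dots> = (\<Sum>p\<in>pairs n. if snd (x p) then 0 else 1)"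
    by (subst sum.inter_filter[OF finite_pairs]) (auto intro!: sum.cong)
  finally show ?thesis .
qed

lemma card_eval_set: "card (eval_set n x) = 2 * eval_pair_count n x"
proof -
  have "real (card (eval_set n x)) = (\<Sum>(i,j)\<in>eval_set n x. (1::real))"
    by simp
  also have "\<dots> = (\<Sum>p\<in>pairs n. 2 * (if snd (x p) then 0 else 1))"
    by (subst sum_eval_set) (auto intro!: sum.cong)
  also have "\<dots> = 2 * real (eval_pair_count n x)"
    by (simp add: eval_pair_count_eq_sum sum_distrib_left)
  finally show ?thesis by linarith
qed

lemma card_eval_set_lower_bound:
  fixes c q :: real
  assumes n: "2 \<le> n" and c: "0 \<le> c" and q: "0 \<le> q"
    and count: "c * (card (pairs n) * q) \<le> eval_pair_count n x"
  shows "c / 2 * (real n)\<^sup>2 * q \<le> card (eval_set n x)"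
proof -
  have "(real n)\<^sup>2 / 4 \<le> real (card (pairs n))"
    using n by (simp add: card_pairs power2_eq_square field_simps)
  hence "c / 2 * (real n)\<^sup>2 * q \<le> 2 * (c * (card (pairs n) * q))"
    using mult_left_mono[of "(real n)\<^sup>2 / 4" "real (card (pairs n))" "2 * c * q"] c q
    by (simp add: mult_ac)
  thus ?thesis using count by (simp add: card_eval_set)
qed

lemma expectation_eval_pair_count_sq_dev:
  fixes w :: real
  assumes w: "0 \<le> w" "w \<le> 1"
  shows "measure_pmf.expectation (sample_pmf n P w)
           (\<lambda>x. (real (eval_pair_count n x) - real (card (pairs n)) * (1 - w))\<^sup>2)
         \<le> real (card (pairs n)) * (1 - w)"
proof -
  define h :: "bool \<Rightarrow> real" where "h = (\<lambda>e. (if e then 0 else 1) - (1 - w))"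
  define g where "g = (\<lambda>y :: bool \<times> bool. h (snd y))"
  have Eg: "measure_pmf.expectation (pair_pmf (bernoulli_pmf a) (bernoulli_pmf w)) g = 0" for a
    unfolding g_def expectation_pair_pmf_snd using w by (simp add: h_def algebra_simps)
  have Eg2: "measure_pmf.expectation (pair_pmf (bernoulli_pmf a) (bernoulli_pmf w)) (\<lambda>y. (g y)\<^sup>2)
             \<le> 1 - w" for a
    unfolding g_def expectation_pair_pmf_snd[of _ _ "\<lambda>e. (h e)\<^sup>2"]
    using w zero_le_power2[of "1 - w"] by (simp add: h_def power2_eq_square algebra_simps)
  have dev: "real (eval_pair_count n x) - real (card (pairs n)) * (1 - w) = (\<Sum>p\<in>pairs n. g (x p))"
    for x
    by (simp add: eval_pair_count_eq_sum g_def h_def sum_subtractf)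
  have orth: "measure_pmf.expectation (sample_pmf n P w) (\<lambda>x. g (x p) * g (x q) * 1) = 0"
    if "p \<in> pairs n" "q \<noteq> p" for p q
    using that Eg expectation_sample_mult_indep[where i = "fst p" and j = "snd p"
        and F = "\<lambda>x. g (x q)" and g = g]
    by simp
  have diag: "measure_pmf.expectation (sample_pmf n P w) (\<lambda>x. (g (x p))\<^sup>2 * 1) \<le> 1 - w"
    if "p \<in> pairs n" for p
    using that Eg2 expectation_sample_mult_indep[where i = "fst p" and j = "snd p" and F = "\<lambda>_. 1"
        and g = "\<lambda>y. (g y)\<^sup>2"]
    by simp
  have "measure_pmf.expectation (sample_pmf n P w)
          (\<lambda>x. (real (eval_pair_count n x) - real (card (pairs n)) * (1 - w))\<^sup>2)
        = (\<Sum>p\<in>pairs n. measure_pmf.expectation (sample_pmf n P w) (\<lambda>x. (g (x p))\<^sup>2 * 1))"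
    unfolding dev
    using expectation_sq_sum_orthogonal[OF finite_pairs[of n] finite_set_pmf_sample[of n P w],
        where Y = "\<lambda>p x. g (x p)" and \<phi> = "\<lambda>_. 1"]
      orth by simp
  also have "\<dots> \<le> real (card (pairs n)) * (1 - w)"
    using sum_mono[OF diag] by simp
  finally show ?thesis .
qed

lemma prob_eval_pair_count_small:
  fixes c w :: real
  assumes c: "0 < c" "c \<le> 1/2" and w: "0 \<le> w" "w \<le> 1"
  shows "measure_pmf.prob (sample_pmf n P w)
           {x. 0 < eval_pair_count n x \<and> eval_pair_count n x < c * (card (pairs n) * (1 - w))}
         \<le> 4 * c"
proof -
  define \<mu> where "\<mu> = real (card (pairs n)) * (1 - w)"
  \<comment> \<open>A positive count is at least 1, so the event is empty unless \<open>c * \<mu> > 1\<close>; then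
    Chebyshev's bound \<open>1 / ((1 - c)\<^sup>2 * \<mu>)\<close> is at most \<open>4 * c\<close>.\<close>
  show ?thesis
  proof (cases "c * \<mu> \<le> 1")
    case True
    hence "{x. 0 < eval_pair_count n x \<and> eval_pair_count n x < c * \<mu>} = {}"
      by auto
    thus ?thesis unfolding \<mu>_def[symmetric] using c by (simp only:) simp
  next
    case False
    hence \<mu>: "1 < c * \<mu>" "0 < \<mu>"
      using c by (auto, smt (verit) mult_nonneg_nonpos)
    have "1 \<le> 4 * (1 - c)\<^sup>2"
      using power_mono[of "1/2" "1 - c" 2] c by (auto simp: power2_eq_square)
    hence "1 * 1 \<le> (4 * (1 - c)\<^sup>2) * (c * \<mu>)"
      using \<mu> by (intro mult_mono) auto
    hence "\<mu> * 1 \<le> \<mu> * ((4 * (1 - c)\<^sup>2) * (c * \<mu>))"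
      using \<mu> by (intro mult_left_mono) auto
    hence "\<mu> \<le> ((1 - c) * \<mu>)\<^sup>2 * (4 * c)"
      by (simp add: power_mult_distrib power2_eq_square mult_ac)
    hence "measure_pmf.prob (sample_pmf n P w) {x. ((1 - c) * \<mu>)\<^sup>2 < (eval_pair_count n x - \<mu>)\<^sup>2}
           \<le> 4 * c"
      using expectation_eval_pair_count_sq_dev[OF w, of n P] c
      by (intro prob_less_le_of_expectation_le[OF finite_set_pmf_sample]) (simp_all add: \<mu>_def)
    moreover have "{x. 0 < eval_pair_count n x \<and> eval_pair_count n x < c * \<mu>} \<subseteq>
                   {x. ((1 - c) * \<mu>)\<^sup>2 < (eval_pair_count n x - \<mu>)\<^sup>2}"
    proof safe
      fix x assume "real (eval_pair_count n x) < c * \<mu>"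
      hence "(1 - c) * \<mu> < \<mu> - eval_pair_count n x" "0 \<le> (1 - c) * \<mu>"
        using c \<mu> by (auto simp: algebra_simps)
      thus "((1 - c) * \<mu>)\<^sup>2 < (eval_pair_count n x - \<mu>)\<^sup>2"
        by (metis power2_commute power_strict_mono zero_less_numeral)
    qed
    hence "measure_pmf.prob (sample_pmf n P w)
             {x. 0 < eval_pair_count n x \<and> eval_pair_count n x < c * \<mu>}
           \<le> measure_pmf.prob (sample_pmf n P w) {x. ((1 - c) * \<mu>)\<^sup>2 < (eval_pair_count n x - \<mu>)\<^sup>2}"
      by (rule measure_pmf.finite_measure_mono) simp
    ultimately show ?thesis
      unfolding \<mu>_def by linarith
  qed
qed

lemma finite_abs_entries: "finite {\<bar>M i j\<bar> | i j. i < n \<and> j < (n :: nat)}"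
proof -
  have "{\<bar>M i j\<bar> | i j. i < n \<and> j < n} = (\<lambda>(i,j). \<bar>M i j\<bar>) ` ({..<n} \<times> {..<n})"
    by auto
  thus ?thesis by (simp add: finite_imageI)
qed

lemma sup_norm_nonneg: "0 \<le> sup_norm n M"
  unfolding sup_norm_def using finite_abs_entries by (intro Max_ge) auto

lemma abs_le_sup_norm: "i < n \<Longrightarrow> j < n \<Longrightarrow> \<bar>M i j\<bar> \<le> sup_norm n M"
  unfolding sup_norm_def using finite_abs_entries by (intro Max_ge) auto

lemma sup_norm_le_1:
  "(\<And>i j. i < n \<Longrightarrow> j < n \<Longrightarrow> \<bar>M i j\<bar> \<le> 1) \<Longrightarrow> sup_norm n M \<le> 1"
  unfolding sup_norm_def using finite_abs_entries by (subst Max_le_iff) auto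

section \<open>The cross term\<close>

definition cross_term ::
    "nat \<Rightarrow> (nat \<Rightarrow> nat \<Rightarrow> real) \<Rightarrow> (outcome \<Rightarrow> nat \<Rightarrow> nat \<Rightarrow> real) \<Rightarrow> outcome \<Rightarrow> real" where
  "cross_term n P D x = (\<Sum>(i,j)\<in>eval_set n x. (adj x i j - P i j) * D x i j)"

definition eval_sq :: "nat \<Rightarrow> (outcome \<Rightarrow> nat \<Rightarrow> nat \<Rightarrow> real) \<Rightarrow> outcome \<Rightarrow> real" where
  "eval_sq n D x = (\<Sum>(i,j)\<in>eval_set n x. (D x i j)\<^sup>2)"

definition eval_edge_invariant :: "nat \<Rightarrow> (outcome \<Rightarrow> 'a) \<Rightarrow> bool" where
  "eval_edge_invariant n F \<longleftrightarrow>
     (\<forall>x p e. p \<in> pairs n \<longrightarrow> \<not> snd (x p) \<longrightarrow> F (x(p := (e, False))) = F x)"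

lemma eval_edge_invariant_if_training_only:
  "training_only n Ph \<Longrightarrow> eval_edge_invariant n Ph"
  unfolding training_only_def eval_edge_invariant_def by (metis fun_upd_apply snd_conv)

lemma eval_set_fun_upd_eval_edge:
  "\<not> snd (x p) \<Longrightarrow> eval_set n (x(p := (e, False))) = eval_set n x"
  unfolding eval_set_def in_train_def by (auto split: if_splits)

lemma eval_edge_invariant_eval_sq:
  "eval_edge_invariant n D \<Longrightarrow> eval_edge_invariant n (eval_sq n D)"
  unfolding eval_edge_invariant_def eval_sq_def by (auto simp: eval_set_fun_upd_eval_edge)

lemma eval_sq_nonneg: "0 \<le> eval_sq n D x"
  unfolding eval_sq_def by (intro sum_nonneg) auto

lemma cross_term_eq_0_if_eval_sq_eq_0:
  assumes "eval_sq n D x = 0" shows "cross_term n P D x = 0"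
proof -
  have "finite (eval_set n x)"
    by (rule finite_subset[of _ "{..<n} \<times> {..<n}"]) (auto simp: eval_set_def)
  hence "\<forall>(i,j)\<in>eval_set n x. D x i j = 0"
    using assms unfolding eval_sq_def by (subst (asm) sum_nonneg_eq_0_iff) auto
  thus ?thesis unfolding cross_term_def by (intro sum.neutral) auto
qed

lemma eval_sq_le_frob_sq: "eval_sq n D x \<le> frob_sq n (D x)"
proof -
  have "eval_sq n D x \<le> (\<Sum>(i,j)\<in>{..<n} \<times> {..<n}. (D x i j)\<^sup>2)"
    unfolding eval_sq_def by (rule sum_mono2) (auto simp: eval_set_def)
  thus ?thesis unfolding frob_sq_def by (simp add: sum.cartesian_product)
qed

lemma sum_sq_residual_eq:
  "(\<Sum>(i,j)\<in>eval_set n x. (adj x i j - Ph x i j)\<^sup>2) =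
   (\<Sum>(i,j)\<in>eval_set n x. (adj x i j - P i j)\<^sup>2)
     - 2 * cross_term n P (\<lambda>x i j. Ph x i j - P i j) x + eval_sq n (\<lambda>x i j. Ph x i j - P i j) x"
  unfolding cross_term_def eval_sq_def
  by (simp add: sum_subtractf[symmetric] sum.distrib[symmetric] sum_distrib_left case_prod_beta
      power2_eq_square algebra_simps)

definition edge_noise :: "(nat \<Rightarrow> nat \<Rightarrow> real) \<Rightarrow> outcome \<Rightarrow> nat \<times> nat \<Rightarrow> real" where
  "edge_noise P x = (\<lambda>(i,j). (if fst (x (i,j)) then 1 else 0) - P i j)"

definition eval_weight :: "(outcome \<Rightarrow> nat \<Rightarrow> nat \<Rightarrow> real) \<Rightarrow> outcome \<Rightarrow> nat \<times> nat \<Rightarrow> real" where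
  "eval_weight D x = (\<lambda>(i,j). if snd (x (i,j)) then 0 else D x i j + D x j i)"

lemma cross_term_eq_sum_pairs:
  assumes Psym: "\<And>i j. (i,j) \<in> pairs n \<Longrightarrow> P j i = P i j"
  shows "cross_term n P D x = (\<Sum>p\<in>pairs n. edge_noise P x p * eval_weight D x p)"
  unfolding cross_term_def sum_eval_set
proof (intro sum.cong refl, clarify)
  fix i j assume ij: "(i,j) \<in> pairs n"
  hence "i < j" by (simp add: pairs_def)
  thus "(if snd (x (i,j)) then 0 else (adj x i j - P i j) * D x i j + (adj x j i - P j i) * D x j i)
        = edge_noise P x (i,j) * eval_weight D x (i,j)"
    using Psym[OF ij] by (simp add: edge_noise_def eval_weight_def adj_def distrib_left)
qed

lemma sum_eval_weight_sq_le: "(\<Sum>p\<in>pairs n. (eval_weight D x p)\<^sup>2) \<le> 2 * eval_sq n D x"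
proof -
  have "2 * eval_sq n D x = (\<Sum>p\<in>pairs n.
          2 * (if snd (x p) then 0 else (D x (fst p) (snd p))\<^sup>2 + (D x (snd p) (fst p))\<^sup>2))"
    unfolding eval_sq_def sum_eval_set by (simp add: sum_distrib_left split_def)
  moreover have "(eval_weight D x p)\<^sup>2
      \<le> 2 * (if snd (x p) then 0 else (D x (fst p) (snd p))\<^sup>2 + (D x (snd p) (fst p))\<^sup>2)" for p
    using sum_squares_bound[of "D x (fst p) (snd p)" "D x (snd p) (fst p)"]
    by (auto simp: eval_weight_def split_def power2_eq_square algebra_simps)
  ultimately show ?thesis by (simp add: sum_mono)
qed

lemma edge_noise_fun_upd: "q \<noteq> p \<Longrightarrow> edge_noise P (x(p := y)) q = edge_noise P x q"
  by (simp add: edge_noise_def split: prod.splits)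

lemma eval_weight_fun_upd_eval_edge:
  assumes "eval_edge_invariant n D" "p \<in> pairs n" "\<not> snd (x p)"
  shows "eval_weight D (x(p := (e, False))) q = eval_weight D x q"
proof -
  have "D (x(p := (e, False))) = D x"
    using assms unfolding eval_edge_invariant_def by blast
  thus ?thesis using assms(3) by (auto simp: eval_weight_def split: prod.splits)
qed

lemma eval_weight_mult_fun_upd_edge:
  assumes "eval_edge_invariant n D" "p \<in> pairs n"
    and G: "\<And>x e. \<not> snd (x p) \<Longrightarrow> G (x(p := (e, False))) = G x"
  shows "eval_weight D (x(p := (e, snd (x p)))) p * G (x(p := (e, snd (x p))))
         = eval_weight D x p * G x"
  using eval_weight_fun_upd_eval_edge[OF assms(1,2), of x e p] G[of x e]
  by (cases "snd (x p)") (auto simp: eval_weight_def split: prod.splits)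

context
  fixes n :: nat and P :: "nat \<Rightarrow> nat \<Rightarrow> real" and w :: real
    and D :: "outcome \<Rightarrow> nat \<Rightarrow> nat \<Rightarrow> real" and \<phi> :: "outcome \<Rightarrow> real"
  assumes D: "eval_edge_invariant n D" and \<phi>: "eval_edge_invariant n \<phi>"
begin

private lemma \<phi>_fun_upd_eval_edge: "p \<in> pairs n \<Longrightarrow> \<not> snd (x p) \<Longrightarrow> \<phi> (x(p := (e, False))) = \<phi> x"
  using \<phi> unfolding eval_edge_invariant_def by blast

lemma expectation_edge_noise_orth:
  assumes P01: "\<And>i j. (i,j) \<in> pairs n \<Longrightarrow> 0 \<le> P i j \<and> P i j \<le> 1"
    and p: "p \<in> pairs n" and "p \<noteq> q"
  shows "measure_pmf.expectation (sample_pmf n P w) (\<lambda>x.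
           edge_noise P x p * eval_weight D x p * (edge_noise P x q * eval_weight D x q) * \<phi> x) = 0"
proof (cases p)
  case (Pair i j)
  have inv: "eval_weight D (x(p := (e, snd (x p)))) p * (edge_noise P (x(p := (e, snd (x p)))) q *
               eval_weight D (x(p := (e, snd (x p)))) q * \<phi> (x(p := (e, snd (x p)))))
             = eval_weight D x p * (edge_noise P x q * eval_weight D x q * \<phi> x)" for x e
    by (rule eval_weight_mult_fun_upd_edge[OF D p,
          where G = "\<lambda>x. edge_noise P x q * eval_weight D x q * \<phi> x"])
       (simp add: edge_noise_fun_upd \<open>p \<noteq> q\<close>[symmetric] eval_weight_fun_upd_eval_edge[OF D p]
          \<phi>_fun_upd_eval_edge[OF p])
  have "measure_pmf.expectation (sample_pmf n P w)
          (\<lambda>x. ((\<lambda>a. (if a then 1 else 0) - P i j) (fst (x (i,j)))) *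
               (eval_weight D x p * (edge_noise P x q * eval_weight D x q * \<phi> x)))
        = measure_pmf.expectation (bernoulli_pmf (P i j)) (\<lambda>a. (if a then 1 else 0) - P i j) *
          measure_pmf.expectation (sample_pmf n P w)
            (\<lambda>x. eval_weight D x p * (edge_noise P x q * eval_weight D x q * \<phi> x))"
    using p inv Pair by (intro expectation_sample_mult_indep_edge) auto
  moreover have
    "measure_pmf.expectation (bernoulli_pmf (P i j)) (\<lambda>a. (if a then 1 else 0) - P i j) = 0"
    using P01[of i j] p Pair by (simp add: algebra_simps)
  ultimately show ?thesis by (simp add: edge_noise_def Pair mult_ac)
qed

lemma expectation_edge_noise_sq_le:
  assumes P01: "\<And>i j. (i,j) \<in> pairs n \<Longrightarrow> 0 \<le> P i j \<and> P i j \<le> 1"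
    and Ps: "\<And>i j. (i,j) \<in> pairs n \<Longrightarrow> P i j \<le> s"
    and \<phi>0: "\<And>x. 0 \<le> \<phi> x" and p: "p \<in> pairs n"
  shows "measure_pmf.expectation (sample_pmf n P w)
           (\<lambda>x. (edge_noise P x p * eval_weight D x p)\<^sup>2 * \<phi> x)
         \<le> s * measure_pmf.expectation (sample_pmf n P w) (\<lambda>x. (eval_weight D x p)\<^sup>2 * \<phi> x)"
proof (cases p)
  case (Pair i j)
  have inv: "eval_weight D (x(p := (e, snd (x p)))) p * (eval_weight D (x(p := (e, snd (x p)))) p *
               \<phi> (x(p := (e, snd (x p))))) = eval_weight D x p * (eval_weight D x p * \<phi> x)" for x e
    by (rule eval_weight_mult_fun_upd_edge[OF D p, where G = "\<lambda>x. eval_weight D x p * \<phi> x"])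
       (simp add: eval_weight_fun_upd_eval_edge[OF D p] \<phi>_fun_upd_eval_edge[OF p])
  have "measure_pmf.expectation (sample_pmf n P w)
          (\<lambda>x. (edge_noise P x p * eval_weight D x p)\<^sup>2 * \<phi> x)
        = measure_pmf.expectation (bernoulli_pmf (P i j)) (\<lambda>a. ((if a then 1 else 0) - P i j)\<^sup>2) *
          measure_pmf.expectation (sample_pmf n P w)
            (\<lambda>x. eval_weight D x p * (eval_weight D x p * \<phi> x))"
    using expectation_sample_mult_indep_edge[of i j n
        "\<lambda>x. eval_weight D x p * (eval_weight D x p * \<phi> x)" P w
        "\<lambda>a. ((if a then 1 else 0) - P i j)\<^sup>2"] p inv Pair
    by (simp add: edge_noise_def power2_eq_square mult_ac)
  also have "measure_pmf.expectation (bernoulli_pmf (P i j)) (\<lambda>a. ((if a then 1 else 0) - P i j)\<^sup>2)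
             = P i j * (1 - P i j)"
    using P01[of i j] p Pair by (simp add: power2_eq_square algebra_simps)
  also have "P i j * (1 - P i j) \<le> s"
    using mult_left_le[of "1 - P i j" "P i j"] P01[of i j] Ps[of i j] p Pair by auto
  finally show ?thesis
    using \<phi>0 by (simp add: mult_right_mono power2_eq_square mult_ac)
qed

end

lemma expectation_cross_term_sq:
  fixes D :: "outcome \<Rightarrow> nat \<Rightarrow> nat \<Rightarrow> real" and \<phi> :: "outcome \<Rightarrow> real"
  assumes P01: "\<And>i j. (i,j) \<in> pairs n \<Longrightarrow> 0 \<le> P i j \<and> P i j \<le> 1"
    and Ps: "\<And>i j. (i,j) \<in> pairs n \<Longrightarrow> P i j \<le> s"
    and Psym: "\<And>i j. (i,j) \<in> pairs n \<Longrightarrow> P j i = P i j"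
    and D: "eval_edge_invariant n D" and \<phi>: "eval_edge_invariant n \<phi>" and \<phi>0: "\<And>x. 0 \<le> \<phi> x"
    and s: "0 \<le> s"
  shows "measure_pmf.expectation (sample_pmf n P w) (\<lambda>x. (cross_term n P D x)\<^sup>2 * \<phi> x)
         \<le> 2 * s * measure_pmf.expectation (sample_pmf n P w) (\<lambda>x. eval_sq n D x * \<phi> x)"
proof -
  \<comment> \<open>Given the training data the edge noises are independent and centred, so only the
    diagonal of the second moment of the cross term survives.\<close>
  have "measure_pmf.expectation (sample_pmf n P w) (\<lambda>x. (cross_term n P D x)\<^sup>2 * \<phi> x)
        = (\<Sum>p\<in>pairs n. measure_pmf.expectation (sample_pmf n P w)
             (\<lambda>x. (edge_noise P x p * eval_weight D x p)\<^sup>2 * \<phi> x))"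
    using expectation_sq_sum_orthogonal[OF finite_pairs[of n] finite_set_pmf_sample[of n P w],
        where Y = "\<lambda>p x. edge_noise P x p * eval_weight D x p" and \<phi> = \<phi>]
      expectation_edge_noise_orth[OF D \<phi> P01]
    by (simp add: cross_term_eq_sum_pairs[OF Psym])
  also have "\<dots> \<le> (\<Sum>p\<in>pairs n. s * measure_pmf.expectation (sample_pmf n P w)
                                    (\<lambda>x. (eval_weight D x p)\<^sup>2 * \<phi> x))"
    by (intro sum_mono expectation_edge_noise_sq_le[OF D \<phi> P01 Ps \<phi>0])
  also have "\<dots> = s * measure_pmf.expectation (sample_pmf n P w)
                        (\<lambda>x. (\<Sum>p\<in>pairs n. (eval_weight D x p)\<^sup>2) * \<phi> x)"
    by (simp add: Bochner_Integration.integral_sum integrable_sample sum_distrib_left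
        sum_distrib_right)
  also have "\<dots> \<le> s * measure_pmf.expectation (sample_pmf n P w) (\<lambda>x. 2 * eval_sq n D x * \<phi> x)"
    using sum_eval_weight_sq_le \<phi>0 s
    by (intro mult_left_mono integral_mono integrable_sample mult_right_mono) auto
  finally show ?thesis by (simp add: mult.assoc)
qed

lemma prob_cross_term_large:
  fixes D :: "outcome \<Rightarrow> nat \<Rightarrow> nat \<Rightarrow> real"
  assumes P01: "\<And>i j. (i,j) \<in> pairs n \<Longrightarrow> 0 \<le> P i j \<and> P i j \<le> 1"
    and Ps: "\<And>i j. (i,j) \<in> pairs n \<Longrightarrow> P i j \<le> s"
    and Psym: "\<And>i j. (i,j) \<in> pairs n \<Longrightarrow> P j i = P i j"
    and D: "eval_edge_invariant n D" and s: "0 \<le> s" and eps: "0 < eps"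
  shows "measure_pmf.prob (sample_pmf n P w)
           {x. (2 * s / eps) * eval_sq n D x < (cross_term n P D x)\<^sup>2} \<le> eps"
proof -
  \<comment> \<open>Chebyshev's inequality conditional on the training data: Markov's inequality for the
    square of the cross term weighted by \<open>\<phi>\<close>, a function of the training data.\<close>
  define \<phi> where "\<phi> = (\<lambda>x. inverse (eval_sq n D x))"
  have \<phi>: "eval_edge_invariant n \<phi>"
    using eval_edge_invariant_eval_sq[OF D] unfolding \<phi>_def eval_edge_invariant_def by simp
  have "measure_pmf.expectation (sample_pmf n P w) (\<lambda>x. eval_sq n D x * \<phi> x)
        \<le> measure_pmf.expectation (sample_pmf n P w) (\<lambda>_. 1)"
    by (intro integral_mono integrable_sample) (simp add: \<phi>_def field_simps)
  hence "measure_pmf.expectation (sample_pmf n P w) (\<lambda>x. eval_sq n D x * \<phi> x) \<le> 1"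
    by simp
  hence "measure_pmf.expectation (sample_pmf n P w) (\<lambda>x. (cross_term n P D x)\<^sup>2 * \<phi> x)
         \<le> (2 * s / eps) * eps"
    using expectation_cross_term_sq[where n = n and P = P and s = s and D = D and \<phi> = \<phi> and w = w,
        OF P01 Ps Psym D \<phi> _ s] eps s mult_left_mono[of _ 1 "2 * s"]
    by (force simp: \<phi>_def eval_sq_nonneg)
  hence "measure_pmf.prob (sample_pmf n P w) {x. 2 * s / eps < (cross_term n P D x)\<^sup>2 * \<phi> x} \<le> eps"
    using s eps by (intro prob_less_le_of_expectation_le[OF finite_set_pmf_sample])
                   (auto simp: \<phi>_def eval_sq_nonneg)
  moreover have "{x. (2 * s / eps) * eval_sq n D x < (cross_term n P D x)\<^sup>2}
                 \<subseteq> {x. 2 * s / eps < (cross_term n P D x)\<^sup>2 * \<phi> x}"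
  proof safe
    fix x assume less: "(2 * s / eps) * eval_sq n D x < (cross_term n P D x)\<^sup>2"
    hence "eval_sq n D x \<noteq> 0"
      using cross_term_eq_0_if_eval_sq_eq_0 by fastforce
    hence "0 < eval_sq n D x" using eval_sq_nonneg[of n D x] by linarith
    thus "2 * s / eps < (cross_term n P D x)\<^sup>2 * \<phi> x"
      using less by (simp add: \<phi>_def field_simps)
  qed
  hence "measure_pmf.prob (sample_pmf n P w)
           {x. (2 * s / eps) * eval_sq n D x < (cross_term n P D x)\<^sup>2}
         \<le> measure_pmf.prob (sample_pmf n P w) {x. 2 * s / eps < (cross_term n P D x)\<^sup>2 * \<phi> x}"
    by (rule measure_pmf.finite_measure_mono) simp
  ultimately show ?thesis by linarith
qed

section \<open>Stochastic order symbols and limits\<close>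

lemma bigO_P_eventually_at_top:
  assumes X: "bigO_P \<Omega> X a" and a: "\<And>n. 0 \<le> a n" and eps: "0 < eps"
  shows "eventually (\<lambda>C. eventually (\<lambda>n.
           measure_pmf.prob (\<Omega> n) {\<omega>. C * a n < \<bar>X n \<omega>\<bar>} \<le> eps) sequentially) at_top"
proof -
  obtain C0 N where N: "\<And>n. N \<le> n \<Longrightarrow> measure_pmf.prob (\<Omega> n) {\<omega>. C0 * a n < \<bar>X n \<omega>\<bar>} \<le> eps"
    using X eps unfolding bigO_P_def by blast
  have "measure_pmf.prob (\<Omega> n) {\<omega>. C * a n < \<bar>X n \<omega>\<bar>} \<le> eps" if "C0 \<le> C" "N \<le> n" for C n
  proof -
    have "{\<omega>. C * a n < \<bar>X n \<omega>\<bar>} \<subseteq> {\<omega>. C0 * a n < \<bar>X n \<omega>\<bar>}"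
      using mult_right_mono[OF \<open>C0 \<le> C\<close> a[of n]] by auto
    hence "measure_pmf.prob (\<Omega> n) {\<omega>. C * a n < \<bar>X n \<omega>\<bar>}
           \<le> measure_pmf.prob (\<Omega> n) {\<omega>. C0 * a n < \<bar>X n \<omega>\<bar>}"
      by (rule measure_pmf.finite_measure_mono) simp
    thus ?thesis using N[OF \<open>N \<le> n\<close>] by linarith
  qed
  thus ?thesis unfolding eventually_at_top_linorder eventually_sequentially by blast
qed

lemma bigOmega_P_eventually_at_right_0:
  assumes X: "bigOmega_P \<Omega> X b" and b: "\<And>n. 0 \<le> b n" and eps: "0 < eps"
  shows "eventually (\<lambda>c. eventually (\<lambda>n.
           measure_pmf.prob (\<Omega> n) {\<omega>. \<bar>X n \<omega>\<bar> < c * b n} \<le> eps) sequentially) (at_right 0)"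
proof -
  obtain c0 N where c0: "0 < c0"
    and N: "\<And>n. N \<le> n \<Longrightarrow> measure_pmf.prob (\<Omega> n) {\<omega>. \<bar>X n \<omega>\<bar> < c0 * b n} \<le> eps"
    using X eps unfolding bigOmega_P_def by blast
  have "measure_pmf.prob (\<Omega> n) {\<omega>. \<bar>X n \<omega>\<bar> < c * b n} \<le> eps" if "c < c0" "N \<le> n" for c n
  proof -
    have "{\<omega>. \<bar>X n \<omega>\<bar> < c * b n} \<subseteq> {\<omega>. \<bar>X n \<omega>\<bar> < c0 * b n}"
      using mult_right_mono[OF less_imp_le[OF \<open>c < c0\<close>] b[of n]] by auto
    hence "measure_pmf.prob (\<Omega> n) {\<omega>. \<bar>X n \<omega>\<bar> < c * b n}
           \<le> measure_pmf.prob (\<Omega> n) {\<omega>. \<bar>X n \<omega>\<bar> < c0 * b n}"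
      by (rule measure_pmf.finite_measure_mono) simp
    thus ?thesis using N[OF \<open>N \<le> n\<close>] by linarith
  qed
  thus ?thesis unfolding eventually_at_right_field eventually_sequentially using c0 by blast
qed

lemma ll_P_eventually_prob_le:
  assumes "ll_P \<Omega> X Y" "0 < \<eta>" "0 < eps"
  shows "eventually (\<lambda>n. measure_pmf.prob (\<Omega> n) {\<omega>. \<eta> < \<bar>X n \<omega> / Y n \<omega>\<bar>} \<le> eps) sequentially"
proof -
  have "(\<lambda>n. measure_pmf.prob (\<Omega> n) {\<omega>. \<eta> < \<bar>X n \<omega> / Y n \<omega>\<bar>}) \<longlonglongrightarrow> 0"
    using assms unfolding ll_P_def by blast
  from order_tendstoD(2)[OF this \<open>0 < eps\<close>] show ?thesis
    by (rule eventually_mono) simp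
qed

lemma eventually_at_right_0_mult_less:
  fixes c g :: real
  assumes "0 < g"
  shows "eventually (\<lambda>\<eta>. c * \<eta> < g) (at_right 0)"
proof -
  have "((\<lambda>\<eta>. c * \<eta>) \<longlongrightarrow> c * 0) (at_right 0)"
    by (intro tendsto_intros)
  from order_tendstoD(2)[OF this] assms show ?thesis
    by simp
qed

lemma prob_Union_le_card_mult:
  fixes eps :: real
  assumes "finite F" "\<And>B. B \<in> F \<Longrightarrow> measure_pmf.prob Q B \<le> eps"
  shows "measure_pmf.prob Q (\<Union>F) \<le> card F * eps"
proof -
  have "measure_pmf.prob Q (\<Union>B\<in>F. B) \<le> (\<Sum>B\<in>F. measure_pmf.prob Q B)"
    by (rule measure_pmf.finite_measure_subadditive_finite) (use assms in auto)
  also have "\<dots> \<le> card F * eps"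
    using sum_mono[of F _ "\<lambda>_. eps"] assms(2) by simp
  finally show ?thesis by simp
qed

lemma tendsto_prob_1_if_eventually_prob_compl_le:
  assumes c: "0 < c"
    and small: "\<And>eps. 0 < eps \<Longrightarrow> eps \<le> 1 \<Longrightarrow>
                  eventually (\<lambda>n. measure_pmf.prob (Q n) (- G n) \<le> c * eps) sequentially"
  shows "(\<lambda>n. measure_pmf.prob (Q n) (G n)) \<longlonglongrightarrow> 1"
proof -
  have "(\<lambda>n. measure_pmf.prob (Q n) (- G n)) \<longlonglongrightarrow> 0"
  proof (rule order_tendstoI)
    fix r :: real assume r: "0 < r"
    define eps where "eps = min 1 (r / (2 * c))"
    have "eps > 0" "eps \<le> 1" "c * eps < r"
      using r c by (auto simp: eps_def min_def field_simps)
    thus "eventually (\<lambda>n. measure_pmf.prob (Q n) (- G n) < r) sequentially"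
      using small[of eps] by (auto elim: eventually_mono)
  qed (intro always_eventually allI, meson less_le_trans measure_nonneg)
  hence "(\<lambda>n. 1 - measure_pmf.prob (Q n) (- G n)) \<longlonglongrightarrow> 1 - 0"
    by (intro tendsto_intros)
  moreover have "1 - measure_pmf.prob (Q n) (- G n) = measure_pmf.prob (Q n) (G n)" for n
    using measure_pmf.prob_compl[of "G n" "Q n"] by (simp add: Compl_eq_Diff_UNIV)
  ultimately show ?thesis by simp
qed

section \<open>Comparing the losses\<close>

lemma overfit_normalized_le:
  fixes E C k n2 q A l s Cc eps K :: real
  assumes E: "0 \<le> E" "E \<le> Cc * n2 * A" and C: "C\<^sup>2 \<le> (2 * s / eps) * E"
    and k: "eps / 8 * n2 * q \<le> k" "1 \<le> k"
    and l: "A \<le> l" "A * q * s \<le> l\<^sup>2"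
    and pos: "0 < eps" "0 < q" "0 < n2" "0 \<le> s" "0 \<le> A" "0 \<le> Cc"
    and K: "1 \<le> K" "8 * Cc / eps \<le> K" "16 * Cc / eps\<^sup>2 \<le> K"
  shows "E / k \<le> K * (l / q)" "\<bar>C / k\<bar> \<le> K * (l / q)"
proof -
  have k_pos: "0 < eps / 8 * n2 * q" using pos by simp
  have "E / k \<le> Cc * n2 * A / (eps / 8 * n2 * q)"
    using E k k_pos by (intro frac_le) auto
  also have "\<dots> = (8 * Cc / eps) * (A / q)"
    using pos by (simp add: field_simps)
  also have "\<dots> \<le> K * (l / q)"
    using K l pos by (intro mult_mono divide_right_mono) auto
  finally show "E / k \<le> K * (l / q)" .
  have "(C / k)\<^sup>2 \<le> (2 * s / eps) * E / k"
  proof -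
    have "(C / k)\<^sup>2 \<le> (2 * s / eps) * E / k\<^sup>2"
      unfolding power_divide by (rule divide_right_mono[OF C]) simp
    also have "\<dots> \<le> (2 * s / eps) * E / k"
      using k E pos by (intro divide_left_mono) (auto simp: power2_eq_square)
    finally show ?thesis .
  qed
  also have "\<dots> \<le> (2 * s / eps) * (Cc * n2 * A) / (eps / 8 * n2 * q)"
    using E k k_pos pos by (intro frac_le mult_left_mono) auto
  also have "\<dots> = (16 * Cc / eps\<^sup>2) * (A * q * s / q\<^sup>2)"
    using pos by (simp add: field_simps power2_eq_square)
  also have "\<dots> \<le> K * (l / q)\<^sup>2"
    using K l pos divide_right_mono[OF l(2), of "q\<^sup>2"]
    by (intro mult_mono) (auto simp: power_divide)
  also have "\<dots> \<le> (K * (l / q))\<^sup>2"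
    using K mult_right_mono[of K "K * K" "(l / q)\<^sup>2"]
    by (simp add: power_mult_distrib power2_eq_square mult_ac)
  finally show "\<bar>C / k\<bar> \<le> K * (l / q)"
    using K l pos by (subst power2_le_iff_abs_le[symmetric]) auto
qed

lemma abs_cross_le_eighth:
  fixes C E s eps k :: real
  assumes C: "C\<^sup>2 \<le> (2 * s / eps) * E" and s: "0 \<le> s" "s \<le> 1" and pos: "0 < eps" "0 < k"
    and E: "128 / (eps * k) \<le> E / k"
  shows "\<bar>C / k\<bar> \<le> E / k / 8"
proof -
  have E0: "0 \<le> E / k" using E pos by (smt (verit) divide_pos_pos mult_pos_pos)
  have "(C / k)\<^sup>2 \<le> (2 * s / eps) * E / k\<^sup>2"
    unfolding power_divide by (rule divide_right_mono[OF C]) simp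
  also have "\<dots> \<le> (E / k) * (2 / (eps * k))"
    using s pos E0 mult_left_le[of s E]
    by (simp add: power2_eq_square field_simps zero_le_divide_iff)
  also have "\<dots> \<le> (E / k) * ((E / k) / 64)"
    using E E0 pos by (intro mult_left_mono) (auto simp: field_simps)
  also have "\<dots> = (E / k / 8)\<^sup>2"
    by (simp add: power2_eq_square)
  finally show ?thesis
    using E0 by (subst power2_le_iff_abs_le[symmetric]) auto
qed

lemma argmin_set_eq_singleton:
  assumes "mstar \<in> {1..M}" "\<And>m. m \<in> {1..M} \<Longrightarrow> m \<noteq> mstar \<Longrightarrow> L mstar < L m"
  shows "argmin_set M L = {mstar}"
  using assms unfolding argmin_set_def by (force simp: less_imp_le)

lemma argmin_set_eq_singleton_if_separated:
  fixes L e c d :: "nat \<Rightarrow> real"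
  assumes L: "\<And>m. m \<in> {1..M} \<Longrightarrow>
                L m - L mstar = (e m - e mstar) - 2 * (c m - c mstar) + (d m - d mstar) * lam"
    and mstar: "mstar \<in> {1..M}"
    and d_incr: "\<And>m m'. 1 \<le> m \<Longrightarrow> m < m' \<Longrightarrow> m' \<le> M \<Longrightarrow> d m < d m'"
    and pos: "0 < lam" "0 \<le> K" "0 < c0" "1 < mstar \<Longrightarrow> 0 < \<beta>"
    and e0: "\<And>m. m \<in> {1..M} \<Longrightarrow> 0 \<le> e m"
    and over: "\<And>m. m \<in> {mstar..M} \<Longrightarrow> e m \<le> K * u \<and> \<bar>c m\<bar> \<le> K * u"
    and under: "\<And>m. m \<in> {1..<mstar} \<Longrightarrow> c0 * \<beta> \<le> e m \<and> \<bar>c m\<bar> \<le> e m / 8"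
    and u_lam: "u \<le> \<eta> * lam"
    and \<eta>: "\<And>m. m \<in> {1..M} \<Longrightarrow> mstar < m \<Longrightarrow> 5 * K * \<eta> < d m - d mstar"
    and lam_\<beta>: "1 < mstar \<Longrightarrow> lam \<le> \<eta>' * \<beta>"
    and \<eta>': "\<And>m. m \<in> {1..<mstar} \<Longrightarrow> (d mstar - d m) * \<eta>' \<le> c0 / 4"
    and u_\<beta>: "1 < mstar \<Longrightarrow> u \<le> \<eta>'' * \<beta>"
    and \<eta>'': "3 * K * \<eta>'' \<le> c0 / 4"
  shows "argmin_set M L = {mstar}"
proof (rule argmin_set_eq_singleton[OF mstar])
  fix m assume m: "m \<in> {1..M}" "m \<noteq> mstar"
  have ms: "e mstar \<le> K * u" "\<bar>c mstar\<bar> \<le> K * u" using over mstar by auto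
  have "e mstar + 2 * \<bar>c m\<bar> + 2 * \<bar>c mstar\<bar> < e m + (d m - d mstar) * lam"
  proof (cases "mstar < m")
    case True
    have "e mstar + 2 * \<bar>c m\<bar> + 2 * \<bar>c mstar\<bar> \<le> 5 * K * u"
      using ms over[of m] m True by auto
    also have "\<dots> \<le> 5 * K * \<eta> * lam"
      using u_lam pos by (simp add: mult_left_mono)
    also have "\<dots> < (d m - d mstar) * lam"
      using \<eta>[OF m(1) True] pos by simp
    finally show ?thesis using e0[OF m(1)] by simp
  next
    case False
    hence m': "m \<in> {1..<mstar}" "1 < mstar" using m by auto
    have em: "c0 * \<beta> \<le> e m" "\<bar>c m\<bar> \<le> e m / 8" "0 < e m"
      using under[OF m'(1)] mult_pos_pos[OF pos(3) pos(4)[OF m'(2)]] by auto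
    have "3 * K * u \<le> 3 * K * (\<eta>'' * \<beta>)"
      using u_\<beta>[OF m'(2)] pos by (intro mult_left_mono) auto
    also have "\<dots> \<le> c0 / 4 * \<beta>"
      using \<eta>'' pos(4)[OF m'(2)] by (simp add: mult_right_mono)
    finally have "e mstar + 2 * \<bar>c mstar\<bar> \<le> c0 * \<beta> / 4" using ms by simp
    moreover have "(d mstar - d m) * lam \<le> (d mstar - d m) * (\<eta>' * \<beta>)"
      using d_incr[of m mstar] m' mstar lam_\<beta> by (intro mult_left_mono) auto
    moreover have "(d mstar - d m) * (\<eta>' * \<beta>) \<le> c0 / 4 * \<beta>"
      using \<eta>'[OF m'(1)] pos(4)[OF m'(2)] by (simp add: mult_right_mono flip: mult.assoc)
    ultimately show ?thesis using em by (simp add: algebra_simps)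
  qed
  thus "L mstar < L m" using L[OF m(1)] by (simp add: abs_le_iff)
qed

section \<open>Consistency of the cross-validated selection\<close>

locale cv_selection =
  fixes M mstar :: nat
    and P :: "nat \<Rightarrow> nat \<Rightarrow> nat \<Rightarrow> real"
    and w :: "nat \<Rightarrow> real"
    and Phat :: "nat \<Rightarrow> nat \<Rightarrow> outcome \<Rightarrow> nat \<Rightarrow> nat \<Rightarrow> real"
    and d :: "nat \<Rightarrow> real"
    and lam :: "nat \<Rightarrow> outcome \<Rightarrow> real"
    and a b :: "nat \<Rightarrow> nat \<Rightarrow> real"
    and \<Omega> :: "nat \<Rightarrow> outcome pmf"
    and b_min lower :: "nat \<Rightarrow> real"
  assumes \<Omega>_def: "\<Omega> = (\<lambda>n. sample_pmf n (P n) (w n))"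
    and b_min_def: "b_min = (\<lambda>n. Min ((\<lambda>m. b m n) ` {1..<mstar}))"
    and lower_def: "lower = (\<lambda>n.
          max (sqrt (Max ((\<lambda>m. a m n) ` {mstar..M}) * (1 - w n) * sup_norm n (P n)))
              (Max ((\<lambda>m. a m n) ` {mstar..M})))"
    and P_prob: "\<And>n i j. i < n \<Longrightarrow> j < n \<Longrightarrow> 0 \<le> P n i j \<and> P n i j \<le> 1"
    and P_sym: "\<And>n i j. i < n \<Longrightarrow> j < n \<Longrightarrow> P n i j = P n j i"
    and mstar: "mstar \<in> {1..M}"
    and w_range: "\<And>n. 0 < w n \<and> w n < 1"
    and Phat_train: "\<And>m n. m \<in> {1..M} \<Longrightarrow> training_only n (Phat m n)"
    and d_incr: "\<And>m m'. 1 \<le> m \<Longrightarrow> m < m' \<Longrightarrow> m' \<le> M \<Longrightarrow> d m < d m'"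
    and lam_pos: "\<And>n \<omega>. lam n \<omega> > 0"
    and a_nonneg: "\<And>m n. m \<in> {mstar..M} \<Longrightarrow> 0 \<le> a m n"
    and over_fit: "\<And>m. m \<in> {mstar..M} \<Longrightarrow>
          bigO_P \<Omega> (\<lambda>n \<omega>. frob_sq n (\<lambda>i j. Phat m n \<omega> i j - P n i j) / (real n)\<^sup>2) (\<lambda>n. a m n)"
    and b_pos: "\<And>m n. m \<in> {1..<mstar} \<Longrightarrow> 0 < b m n"
    and under_fit: "\<And>m. m \<in> {1..<mstar} \<Longrightarrow>
          bigOmega_P \<Omega> (\<lambda>n \<omega>. (1 / real (card (eval_set n \<omega>))) *
              (\<Sum>(i,j)\<in>eval_set n \<omega>. (Phat m n \<omega> i j - P n i j)\<^sup>2)) (\<lambda>n. b m n)"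
    and rate1: "1 < mstar \<Longrightarrow> filterlim (\<lambda>n. (1 - w n) * b_min n / lower n) at_top sequentially"
    and rate2: "1 < mstar \<Longrightarrow> filterlim (\<lambda>n. (real n)\<^sup>2 * (1 - w n) * b_min n) at_top sequentially"
    and lam_lower: "ll_P \<Omega> (\<lambda>n \<omega>. lower n) (\<lambda>n \<omega>. (1 - w n) * lam n \<omega>)"
    and lam_upper: "1 < mstar \<Longrightarrow> ll_P \<Omega> (\<lambda>n \<omega>. (1 - w n) * lam n \<omega>) (\<lambda>n \<omega>. (1 - w n) * b_min n)"
begin

definition a_max :: "nat \<Rightarrow> real" where
  "a_max n = Max ((\<lambda>m. a m n) ` {mstar..M})"

definition eval_error :: "nat \<Rightarrow> nat \<Rightarrow> outcome \<Rightarrow> real" where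
  "eval_error m n x = eval_sq n (\<lambda>x i j. Phat m n x i j - P n i j) x / card (eval_set n x)"

definition eval_cross :: "nat \<Rightarrow> nat \<Rightarrow> outcome \<Rightarrow> real" where
  "eval_cross m n x = cross_term n (P n) (\<lambda>x i j. Phat m n x i j - P n i j) x / card (eval_set n x)"

lemma a_le_a_max: "m \<in> {mstar..M} \<Longrightarrow> a m n \<le> a_max n"
  unfolding a_max_def by (intro Max_ge) auto

lemma a_max_nonneg: "0 \<le> a_max n"
  using a_le_a_max[of mstar n] a_nonneg[of mstar n] mstar by auto

lemma sup_norm_P_bounds:
  "0 \<le> sup_norm n (P n)" "sup_norm n (P n) \<le> 1" "(i,j) \<in> pairs n \<Longrightarrow> P n i j \<le> sup_norm n (P n)"
  using sup_norm_nonneg sup_norm_le_1[of n "P n"] P_prob abs_le_sup_norm[of i n j "P n"]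
  by (force simp: pairs_def)+

lemma lower_dominates_a_max:
  "a_max n \<le> lower n" "a_max n * (1 - w n) * sup_norm n (P n) \<le> (lower n)\<^sup>2"
proof -
  have nn: "0 \<le> a_max n * (1 - w n) * sup_norm n (P n)"
    using a_max_nonneg w_range[of n] sup_norm_P_bounds(1)[of n] by simp
  hence "a_max n * (1 - w n) * sup_norm n (P n) \<le> (sqrt (a_max n * (1 - w n) * sup_norm n (P n)))\<^sup>2"
    by simp
  also have "\<dots> \<le> (lower n)\<^sup>2"
    unfolding lower_def a_max_def[symmetric] using nn by (intro power_mono) auto
  finally show "a_max n * (1 - w n) * sup_norm n (P n) \<le> (lower n)\<^sup>2" .
  show "a_max n \<le> lower n" unfolding lower_def a_max_def by simp
qed

lemma b_min_le: "m \<in> {1..<mstar} \<Longrightarrow> b_min n \<le> b m n"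
  unfolding b_min_def by (intro Min_le) auto

lemma b_min_pos: "1 < mstar \<Longrightarrow> 0 < b_min n"
  unfolding b_min_def using b_pos by (subst Min_gr_iff) auto

lemma eval_error_nonneg: "0 \<le> eval_error m n x"
  unfolding eval_error_def by (simp add: eval_sq_nonneg)

lemma cv_loss_diff:
  "cv_loss n (Phat m n) (d m) l x - cv_loss n (Phat m' n) (d m') l x =
     (eval_error m n x - eval_error m' n x) - 2 * (eval_cross m n x - eval_cross m' n x)
       + (d m - d m') * l"
  unfolding cv_loss_def eval_error_def eval_cross_def sum_sq_residual_eq[where P = "P n"]
  by (simp add: algebra_simps diff_divide_distrib add_divide_distrib)

definition selects_mstar :: "nat \<Rightarrow> outcome set" where
  "selects_mstar n = {\<omega>. argmin_set M (\<lambda>m. cv_loss n (Phat m n) (d m) (lam n \<omega>) \<omega>) = {mstar}}"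

text \<open>Outcomes without evaluation pairs need not be excluded: for \<open>1 < mstar\<close> they lie in
  \<open>small_fit_error\<close>, and otherwise all losses reduce to \<open>d m * lam\<close>, minimised by model 1.\<close>

definition few_eval_pairs :: "real \<Rightarrow> nat \<Rightarrow> outcome set" where
  "few_eval_pairs eps n =
     {x. 0 < eval_pair_count n x \<and> eval_pair_count n x < eps / 4 * (card (pairs n) * (1 - w n))}"

definition large_fit_error :: "real \<Rightarrow> nat \<Rightarrow> nat \<Rightarrow> outcome set" where
  "large_fit_error Cc m n =
     {x. Cc * a m n < \<bar>frob_sq n (\<lambda>i j. Phat m n x i j - P n i j) / (real n)\<^sup>2\<bar>}"

definition small_fit_error :: "real \<Rightarrow> nat \<Rightarrow> nat \<Rightarrow> outcome set" where
  "small_fit_error c0 m n =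
     {x. \<bar>(1 / real (card (eval_set n x))) * (\<Sum>(i,j)\<in>eval_set n x. (Phat m n x i j - P n i j)\<^sup>2)\<bar>
           < c0 * b m n}"

definition large_cross_term :: "real \<Rightarrow> nat \<Rightarrow> nat \<Rightarrow> outcome set" where
  "large_cross_term eps m n =
     {x. (2 * sup_norm n (P n) / eps) * eval_sq n (\<lambda>x i j. Phat m n x i j - P n i j) x
           < (cross_term n (P n) (\<lambda>x i j. Phat m n x i j - P n i j) x)\<^sup>2}"

definition small_penalty :: "real \<Rightarrow> nat \<Rightarrow> outcome set" where
  "small_penalty \<eta> n = {x. \<eta> < \<bar>lower n / ((1 - w n) * lam n x)\<bar>}"

definition large_penalty :: "real \<Rightarrow> nat \<Rightarrow> outcome set" where
  "large_penalty \<eta> n = (if 1 < mstar then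
     {x. \<eta> < \<bar>(1 - w n) * lam n x / ((1 - w n) * b_min n)\<bar>} else {})"

definition bad_events :: "real \<Rightarrow> real \<Rightarrow> real \<Rightarrow> real \<Rightarrow> real \<Rightarrow> nat \<Rightarrow> outcome set set" where
  "bad_events eps Cc c0 \<eta> \<eta>' n =
     {few_eval_pairs eps n, small_penalty \<eta> n, large_penalty \<eta>' n}
     \<union> (\<lambda>m. large_fit_error Cc m n) ` {mstar..M} \<union> (\<lambda>m. small_fit_error c0 m n) ` {1..<mstar}
     \<union> (\<lambda>m. large_cross_term eps m n) ` {1..M}"

lemma prob_large_cross_term:
  assumes "m \<in> {1..M}" "0 < eps"
  shows "measure_pmf.prob (\<Omega> n) (large_cross_term eps m n) \<le> eps"
  unfolding \<Omega>_def large_cross_term_def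
proof (rule prob_cross_term_large)
  show "eval_edge_invariant n (\<lambda>x i j. Phat m n x i j - P n i j)"
    using eval_edge_invariant_if_training_only[OF Phat_train[OF assms(1)]]
    unfolding eval_edge_invariant_def by metis
qed (use assms P_prob P_sym sup_norm_P_bounds in \<open>auto simp: pairs_def\<close>)

lemma card_bad_events: "card (bad_events eps Cc c0 \<eta> \<eta>' n) \<le> 2 * M + 3"
proof -
  have "card (bad_events eps Cc c0 \<eta> \<eta>' n) \<le> 3 + card {mstar..M} + card {1..<mstar} + card {1..M}"
    unfolding bad_events_def
    by (intro card_Un_le[THEN order_trans] add_mono card_image_le card_insert_le_m1) auto
  moreover have "card {mstar..M} + card {1..<mstar} = M" using mstar by auto
  ultimately show ?thesis by simp
qed

lemma card_eval_set_ge: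
  assumes n: "2 \<le> n" and eps: "0 < eps" and x: "x \<notin> few_eval_pairs eps n"
    and pos: "eval_pair_count n x \<noteq> 0"
  shows "eps / 8 * (real n)\<^sup>2 * (1 - w n) \<le> card (eval_set n x)" "1 \<le> real (card (eval_set n x))"
  using card_eval_set_lower_bound[of n "eps / 4" "1 - w n" x] n eps x pos w_range[of n]
  by (auto simp: card_eval_set few_eval_pairs_def)

lemma overfit_eval_error_le:
  assumes m: "m \<in> {mstar..M}" and n: "2 \<le> n" and eps: "0 < eps" and Cc: "0 \<le> Cc"
    and K: "1 \<le> K" "8 * Cc / eps \<le> K" "16 * Cc / eps\<^sup>2 \<le> K"
    and x: "x \<notin> few_eval_pairs eps n" "x \<notin> large_fit_error Cc m n" "x \<notin> large_cross_term eps m n"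
  shows "eval_error m n x \<le> K * (lower n / (1 - w n))"
    and "\<bar>eval_cross m n x\<bar> \<le> K * (lower n / (1 - w n))"
proof (atomize (full), cases "eval_pair_count n x = 0")
  case True
  have "0 \<le> K * (lower n / (1 - w n))"
    using K a_max_nonneg[of n] lower_dominates_a_max(1)[of n] w_range[of n] by simp
  thus "eval_error m n x \<le> K * (lower n / (1 - w n)) \<and>
        \<bar>eval_cross m n x\<bar> \<le> K * (lower n / (1 - w n))"
    using True by (simp add: eval_error_def eval_cross_def card_eval_set)
next
  case False
  have "0 \<le> frob_sq n (\<lambda>i j. Phat m n x i j - P n i j)" "0 < (real n)\<^sup>2"
    using n unfolding frob_sq_def by (auto intro!: sum_nonneg)
  hence "frob_sq n (\<lambda>i j. Phat m n x i j - P n i j) \<le> Cc * a m n * (real n)\<^sup>2"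
    using x(2) by (simp add: large_fit_error_def not_less pos_divide_le_eq)
  also have "\<dots> \<le> Cc * (real n)\<^sup>2 * a_max n"
    using a_le_a_max[OF m, of n] Cc by (simp add: mult_left_mono mult_right_mono mult_ac)
  finally have E: "eval_sq n (\<lambda>x i j. Phat m n x i j - P n i j) x \<le> Cc * (real n)\<^sup>2 * a_max n"
    by (rule order_trans[OF eval_sq_le_frob_sq])
  have C: "(cross_term n (P n) (\<lambda>x i j. Phat m n x i j - P n i j) x)\<^sup>2
           \<le> (2 * sup_norm n (P n) / eps) * eval_sq n (\<lambda>x i j. Phat m n x i j - P n i j) x"
    using x(3) by (simp add: large_cross_term_def)
  show "eval_error m n x \<le> K * (lower n / (1 - w n)) \<and>
        \<bar>eval_cross m n x\<bar> \<le> K * (lower n / (1 - w n))"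
    using overfit_normalized_le[OF eval_sq_nonneg E C card_eval_set_ge[OF n eps x(1) False]
        lower_dominates_a_max eps _ _ sup_norm_P_bounds(1) a_max_nonneg Cc K] w_range[of n] n
    by (simp add: eval_error_def eval_cross_def)
qed

lemma underfit_eval_error_ge:
  assumes m: "m \<in> {1..<mstar}" and n: "2 \<le> n" and eps: "0 < eps" and c0: "0 < c0"
    and x: "x \<notin> few_eval_pairs eps n" "x \<notin> small_fit_error c0 m n" "x \<notin> large_cross_term eps m n"
    and rate: "1024 / (eps\<^sup>2 * c0) \<le> (real n)\<^sup>2 * (1 - w n) * b_min n"
  shows "c0 * b_min n \<le> eval_error m n x" and "\<bar>eval_cross m n x\<bar> \<le> eval_error m n x / 8"
proof -
  have b: "0 < b_min n" "b_min n \<le> b m n" using b_min_pos b_min_le[OF m] m by auto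
  have "0 \<le> (\<Sum>(i,j)\<in>eval_set n x. (Phat m n x i j - P n i j)\<^sup>2)"
    by (intro sum_nonneg) auto
  hence "c0 * b m n \<le> eval_error m n x"
    using x(2) by (simp add: small_fit_error_def eval_error_def eval_sq_def not_less)
  moreover have "c0 * b_min n \<le> c0 * b m n"
    using b(2) c0 by simp
  ultimately show error: "c0 * b_min n \<le> eval_error m n x"
    by linarith
  have "eval_pair_count n x \<noteq> 0"
  proof
    assume "eval_pair_count n x = 0"
    hence "eval_error m n x = 0" by (simp add: eval_error_def card_eval_set)
    thus False using error mult_pos_pos[OF c0 b(1)] by linarith
  qed
  note k = card_eval_set_ge[OF n eps x(1) this]
  have "1024 \<le> eps\<^sup>2 * c0 * ((real n)\<^sup>2 * (1 - w n) * b_min n)"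
    using rate eps c0 by (simp add: pos_divide_le_eq mult.commute)
  also have "\<dots> = 8 * (eps * (eps / 8 * (real n)\<^sup>2 * (1 - w n)) * (c0 * b_min n))"
    by (simp add: power2_eq_square)
  also have "\<dots> \<le> 8 * (eps * card (eval_set n x) * (c0 * b_min n))"
    using k(1) eps c0 b by (simp add: mult_left_mono mult_right_mono)
  finally have "128 / (eps * card (eval_set n x)) \<le> c0 * b_min n"
    using eps k(2) by (simp add: pos_divide_le_eq mult_ac)
  hence "128 / (eps * card (eval_set n x)) \<le> eval_error m n x"
    using error by linarith
  moreover have "(cross_term n (P n) (\<lambda>x i j. Phat m n x i j - P n i j) x)\<^sup>2
           \<le> (2 * sup_norm n (P n) / eps) * eval_sq n (\<lambda>x i j. Phat m n x i j - P n i j) x"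
    using x(3) by (simp add: large_cross_term_def)
  ultimately show "\<bar>eval_cross m n x\<bar> \<le> eval_error m n x / 8"
    unfolding eval_error_def eval_cross_def
    using abs_cross_le_eighth[OF _ sup_norm_P_bounds(1,2) eps] k(2) by simp
qed

lemma not_selects_mstar_subset_bad_events:
  assumes n: "2 \<le> n" and eps: "0 < eps" and Cc: "0 \<le> Cc" and c0: "0 < c0"
    and K: "1 \<le> K" "8 * Cc / eps \<le> K" "16 * Cc / eps\<^sup>2 \<le> K"
    and \<eta>: "\<And>m. m \<in> {1..M} \<Longrightarrow> mstar < m \<Longrightarrow> 5 * K * \<eta> < d m - d mstar"
    and \<eta>': "\<And>m. m \<in> {1..<mstar} \<Longrightarrow> (d mstar - d m) * \<eta>' \<le> c0 / 4"
    and \<eta>'': "0 < \<eta>''" "3 * K * \<eta>'' \<le> c0 / 4"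
    and rate_1: "1 < mstar \<Longrightarrow> 1 / \<eta>'' \<le> (1 - w n) * b_min n / lower n"
    and rate_2: "1 < mstar \<Longrightarrow> 1024 / (eps\<^sup>2 * c0) \<le> (real n)\<^sup>2 * (1 - w n) * b_min n"
  shows "- selects_mstar n \<subseteq> \<Union>(bad_events eps Cc c0 \<eta> \<eta>' n)"
proof (rule subsetI, rule ccontr)
  fix x assume "x \<in> - selects_mstar n" and good: "x \<notin> \<Union>(bad_events eps Cc c0 \<eta> \<eta>' n)"
  have q: "0 < 1 - w n" and l: "0 \<le> lower n" and lam: "0 < lam n x"
    using w_range[of n] a_max_nonneg[of n] lower_dominates_a_max(1)[of n] lam_pos by auto
  have "argmin_set M (\<lambda>m. cv_loss n (Phat m n) (d m) (lam n x) x) = {mstar}"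
  proof (rule argmin_set_eq_singleton_if_separated[OF cv_loss_diff mstar d_incr])
    have "\<bar>lower n / ((1 - w n) * lam n x)\<bar> \<le> \<eta>"
      using good by (auto simp: bad_events_def small_penalty_def not_less)
    thus "lower n / (1 - w n) \<le> \<eta> * lam n x"
      using q l lam by (simp add: divide_le_eq abs_of_nonneg mult_ac)
    show "lam n x \<le> \<eta>' * b_min n" if "1 < mstar"
    proof -
      have "\<bar>(1 - w n) * lam n x / ((1 - w n) * b_min n)\<bar> \<le> \<eta>'"
        using good that by (auto simp: bad_events_def large_penalty_def not_less)
      thus ?thesis
        using q lam b_min_pos[OF that] by (simp add: divide_le_eq abs_of_pos mult_ac)
    qed
    show "lower n / (1 - w n) \<le> \<eta>'' * b_min n" if "1 < mstar"
    proof (cases "lower n = 0")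
      case False
      thus ?thesis using rate_1[OF that] q l \<eta>''(1) b_min_pos[OF that]
        by (simp add: field_simps)
    qed (use \<eta>''(1) b_min_pos[OF that, of n] in simp)
  qed (use good mstar lam_pos c0 K b_min_pos eval_error_nonneg \<eta> \<eta>' \<eta>''(2)
           overfit_eval_error_le[OF _ n eps Cc K] underfit_eval_error_ge[OF _ n eps c0 _ _ _ rate_2]
         in \<open>auto simp: bad_events_def\<close>)
  with \<open>x \<in> - selects_mstar n\<close> show False by (simp add: selects_mstar_def)
qed

lemma uniform_fit_error_constants:
  assumes eps: "0 < eps"
  obtains Cc c0 where "0 \<le> Cc" "0 < c0"
    "\<forall>m\<in>{mstar..M}.
         eventually (\<lambda>n. measure_pmf.prob (\<Omega> n) (large_fit_error Cc m n) \<le> eps) sequentially"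
    "\<forall>m\<in>{1..<mstar}.
         eventually (\<lambda>n. measure_pmf.prob (\<Omega> n) (small_fit_error c0 m n) \<le> eps) sequentially"
proof -
  have "eventually (\<lambda>C. 0 \<le> C \<and> (\<forall>m\<in>{mstar..M}.
          eventually (\<lambda>n. measure_pmf.prob (\<Omega> n) (large_fit_error C m n) \<le> eps) sequentially))
        at_top"
    using bigO_P_eventually_at_top[OF over_fit a_nonneg eps] unfolding large_fit_error_def
    by (intro eventually_conj eventually_ge_at_top eventually_ball_finite) auto
  then obtain Cc where Cc: "0 \<le> Cc" "\<forall>m\<in>{mstar..M}.
          eventually (\<lambda>n. measure_pmf.prob (\<Omega> n) (large_fit_error Cc m n) \<le> eps) sequentially"
    using eventually_happens'[OF trivial_limit_at_top_linorder] by blast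
  have "eventually (\<lambda>c. 0 < c \<and> (\<forall>m\<in>{1..<mstar}.
          eventually (\<lambda>n. measure_pmf.prob (\<Omega> n) (small_fit_error c m n) \<le> eps) sequentially))
        (at_right 0)"
    using bigOmega_P_eventually_at_right_0[OF under_fit less_imp_le[OF b_pos] eps]
    unfolding small_fit_error_def
    by (intro eventually_conj eventually_at_right_less eventually_ball_finite) auto
  then obtain c0 where c0: "0 < c0" "\<forall>m\<in>{1..<mstar}.
          eventually (\<lambda>n. measure_pmf.prob (\<Omega> n) (small_fit_error c0 m n) \<le> eps) sequentially"
    using eventually_happens'[OF trivial_limit_at_right_real] by blast
  show ?thesis using that[OF Cc(1) c0(1) Cc(2) c0(2)] .
qed

lemma margin_constants:
  assumes "0 \<le> K" "0 < c0"
  obtains \<eta> \<eta>' \<eta>'' where "0 < \<eta>" "0 < \<eta>'" "0 < \<eta>''"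
    "\<And>m. m \<in> {1..M} \<Longrightarrow> mstar < m \<Longrightarrow> 5 * K * \<eta> < d m - d mstar"
    "\<And>m. m \<in> {1..<mstar} \<Longrightarrow> (d mstar - d m) * \<eta>' \<le> c0 / 4" "3 * K * \<eta>'' \<le> c0 / 4"
proof -
  have "eventually (\<lambda>\<eta>. 0 < \<eta> \<and> (\<forall>m\<in>{mstar<..M}. (5 * K) * \<eta> < d m - d mstar)) (at_right 0)"
    using d_incr mstar
    by (intro eventually_conj eventually_at_right_less eventually_ball_finite ballI
        eventually_at_right_0_mult_less) auto
  then obtain \<eta> where \<eta>: "0 < \<eta>" "\<forall>m\<in>{mstar<..M}. 5 * K * \<eta> < d m - d mstar"
    using eventually_happens'[OF trivial_limit_at_right_real] by blast
  have "eventually (\<lambda>\<eta>. 0 < \<eta> \<and> (\<forall>m\<in>{1..<mstar}. (d mstar - d m) * \<eta> < c0 / 4)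
                        \<and> (3 * K) * \<eta> < c0 / 4) (at_right 0)"
    using assms
    by (intro eventually_conj eventually_at_right_less eventually_ball_finite ballI
        eventually_at_right_0_mult_less) auto
  then obtain \<eta>' where \<eta>': "0 < \<eta>'" "\<forall>m\<in>{1..<mstar}. (d mstar - d m) * \<eta>' < c0 / 4"
    "3 * K * \<eta>' < c0 / 4"
    using eventually_happens'[OF trivial_limit_at_right_real] by blast
  show ?thesis
    using that[OF \<eta>(1) \<eta>'(1) \<eta>'(1)] \<eta>(2) \<eta>'(2,3) by fastforce
qed

lemma eventually_no_bad_event:
  assumes eps: "0 < eps" "eps \<le> 1" and \<eta>: "0 < \<eta>" "0 < \<eta>'" "0 < \<eta>''"
    and fit: "\<forall>m\<in>{mstar..M}.
         eventually (\<lambda>n. measure_pmf.prob (\<Omega> n) (large_fit_error Cc m n) \<le> eps) sequentially"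
      "\<forall>m\<in>{1..<mstar}.
         eventually (\<lambda>n. measure_pmf.prob (\<Omega> n) (small_fit_error c0 m n) \<le> eps) sequentially"
  shows "eventually (\<lambda>n. 2 \<le> n \<and> (\<forall>B\<in>bad_events eps Cc c0 \<eta> \<eta>' n. measure_pmf.prob (\<Omega> n) B \<le> eps) \<and>
      (1 < mstar \<longrightarrow> 1 / \<eta>'' \<le> (1 - w n) * b_min n / lower n) \<and>
      (1 < mstar \<longrightarrow> 1024 / (eps\<^sup>2 * c0) \<le> (real n)\<^sup>2 * (1 - w n) * b_min n)) sequentially"
proof -
  have count: "measure_pmf.prob (\<Omega> n) (few_eval_pairs eps n) \<le> eps" for n
    using prob_eval_pair_count_small[of "eps / 4" "w n" n "P n"] eps w_range[of n]
    by (simp add: \<Omega>_def few_eval_pairs_def)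
  have cross: "measure_pmf.prob (\<Omega> n) (large_cross_term eps m n) \<le> eps" if "m \<in> {1..M}" for m n
    using prob_large_cross_term[OF that eps(1)] .
  have "eventually (\<lambda>n. measure_pmf.prob (\<Omega> n) (small_penalty \<eta> n) \<le> eps) sequentially"
    using ll_P_eventually_prob_le[OF lam_lower \<eta>(1) eps(1)] by (simp add: small_penalty_def)
  moreover have "eventually (\<lambda>n. measure_pmf.prob (\<Omega> n) (large_penalty \<eta>' n) \<le> eps) sequentially"
    using ll_P_eventually_prob_le[OF lam_upper \<eta>(2) eps(1)] eps
    by (cases "1 < mstar") (simp_all add: large_penalty_def)
  moreover have "eventually (\<lambda>n. (1 < mstar \<longrightarrow> 1 / \<eta>'' \<le> (1 - w n) * b_min n / lower n) \<and>
      (1 < mstar \<longrightarrow> 1024 / (eps\<^sup>2 * c0) \<le> (real n)\<^sup>2 * (1 - w n) * b_min n)) sequentially"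
    using rate1 rate2 by (cases "1 < mstar") (simp_all add: filterlim_at_top eventually_conj)
  ultimately show ?thesis
    using eventually_ball_finite[OF finite_atLeastAtMost fit(1)]
      eventually_ball_finite[OF finite_atLeastLessThan fit(2)] eventually_ge_at_top[of 2]
    by eventually_elim (use count cross in \<open>auto simp: bad_events_def\<close>)
qed

lemma eventually_prob_not_selects_mstar_le:
  fixes eps :: real
  assumes eps: "0 < eps" "eps \<le> 1"
  shows "eventually (\<lambda>n. measure_pmf.prob (\<Omega> n) (- selects_mstar n) \<le> real (2 * M + 3) * eps)
           sequentially"
proof -
  obtain Cc c0 where Cc: "0 \<le> Cc" and c0: "0 < c0"
    and fit: "\<forall>m\<in>{mstar..M}.
         eventually (\<lambda>n. measure_pmf.prob (\<Omega> n) (large_fit_error Cc m n) \<le> eps) sequentially"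
      "\<forall>m\<in>{1..<mstar}.
         eventually (\<lambda>n. measure_pmf.prob (\<Omega> n) (small_fit_error c0 m n) \<le> eps) sequentially"
    using uniform_fit_error_constants[OF eps(1)] by blast
  define K where "K = 1 + 8 * Cc / eps + 16 * Cc / eps\<^sup>2"
  have K: "1 \<le> K" "8 * Cc / eps \<le> K" "16 * Cc / eps\<^sup>2 \<le> K"
    using Cc eps by (auto simp: K_def)
  obtain \<eta> \<eta>' \<eta>'' where \<eta>: "0 < \<eta>" "0 < \<eta>'" "0 < \<eta>''"
    and margins: "\<And>m. m \<in> {1..M} \<Longrightarrow> mstar < m \<Longrightarrow> 5 * K * \<eta> < d m - d mstar"
      "\<And>m. m \<in> {1..<mstar} \<Longrightarrow> (d mstar - d m) * \<eta>' \<le> c0 / 4" "3 * K * \<eta>'' \<le> c0 / 4"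
    using margin_constants[OF _ c0, of K] K(1) by auto
  show ?thesis
    using eventually_no_bad_event[OF eps \<eta> fit]
  proof (rule eventually_mono, elim conjE)
    fix n :: nat assume n: "2 \<le> n"
      and small: "\<forall>B\<in>bad_events eps Cc c0 \<eta> \<eta>' n. measure_pmf.prob (\<Omega> n) B \<le> eps"
      and rates: "1 < mstar \<longrightarrow> 1 / \<eta>'' \<le> (1 - w n) * b_min n / lower n"
        "1 < mstar \<longrightarrow> 1024 / (eps\<^sup>2 * c0) \<le> (real n)\<^sup>2 * (1 - w n) * b_min n"
    have "measure_pmf.prob (\<Omega> n) (- selects_mstar n)
          \<le> measure_pmf.prob (\<Omega> n) (\<Union>(bad_events eps Cc c0 \<eta> \<eta>' n))"
      using not_selects_mstar_subset_bad_events[OF n eps(1) Cc c0 K margins(1,2) \<eta>(3) margins(3)]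
        rates
      by (intro measure_pmf.finite_measure_mono) auto
    also have "\<dots> \<le> card (bad_events eps Cc c0 \<eta> \<eta>' n) * eps"
      using small by (intro prob_Union_le_card_mult) (auto simp: bad_events_def)
    also have "\<dots> \<le> real (2 * M + 3) * eps"
      using of_nat_mono[OF card_bad_events, where 'a = real] eps by (intro mult_right_mono) auto
    finally show "measure_pmf.prob (\<Omega> n) (- selects_mstar n) \<le> real (2 * M + 3) * eps" .
  qed
qed

theorem prob_selects_mstar_tendsto_1:
  "(\<lambda>n. measure_pmf.prob (\<Omega> n) (selects_mstar n)) \<longlonglongrightarrow> 1"
  using eventually_prob_not_selects_mstar_le
  by (intro tendsto_prob_1_if_eventually_prob_compl_le[of "real (2 * M + 3)"]) auto

end

theorem proposition1:
  fixes M mstar :: nat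
    and P :: "nat \<Rightarrow> nat \<Rightarrow> nat \<Rightarrow> real"                   \<comment> \<open>P n i j\<close>
    and Pm :: "nat \<Rightarrow> nat \<Rightarrow> (nat \<Rightarrow> nat \<Rightarrow> real) set"   \<comment> \<open>model sets: Pm m n\<close>
    and w :: "nat \<Rightarrow> real"
    and Phat :: "nat \<Rightarrow> nat \<Rightarrow> outcome \<Rightarrow> nat \<Rightarrow> nat \<Rightarrow> real"  \<comment> \<open>Phat m n \<omega> i j\<close>
    and d :: "nat \<Rightarrow> real"
    and lam :: "nat \<Rightarrow> outcome \<Rightarrow> real"
    and a b :: "nat \<Rightarrow> nat \<Rightarrow> real"                      \<comment> \<open>a m n, b m n\<close>
  defines "\<Omega> \<equiv> (\<lambda>n. sample_pmf n (P n) (w n))"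
    and "b_min \<equiv> (\<lambda>n. Min ((\<lambda>m. b m n) ` {1..<mstar}))"
    and "lower \<equiv> (\<lambda>n. max (sqrt (Max ((\<lambda>m. a m n) ` {mstar..M}) * (1 - w n) * sup_norm n (P n)))
                          (Max ((\<lambda>m. a m n) ` {mstar..M})))"
  assumes P_prob: "\<And>n i j. i < n \<Longrightarrow> j < n \<Longrightarrow> 0 \<le> P n i j \<and> P n i j \<le> 1"
    and P_sym: "\<And>n i j. i < n \<Longrightarrow> j < n \<Longrightarrow> P n i j = P n j i"
    and M_pos: "1 \<le> M" and mstar: "mstar \<in> {1..M}"
    and nested: "\<And>n m m'. 1 \<le> m \<Longrightarrow> m < m' \<Longrightarrow> m' \<le> M \<Longrightarrow> Pm m n \<subseteq> Pm m' n"
    and true_model: "\<And>n. P n \<in> Pm mstar n"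
    and true_minimal: "\<And>n m'. 1 \<le> m' \<Longrightarrow> m' < mstar \<Longrightarrow> P n \<notin> Pm m' n"
    and w_range: "\<And>n. 0 < w n \<and> w n < 1"
    and Phat_train: "\<And>m n. m \<in> {1..M} \<Longrightarrow> training_only n (Phat m n)"
    and d_incr: "\<And>m m'. 1 \<le> m \<Longrightarrow> m < m' \<Longrightarrow> m' \<le> M \<Longrightarrow> d m < d m'"
    and lam_pos: "\<And>n \<omega>. lam n \<omega> > 0"
    and a_nonneg: "\<And>m n. m \<in> {mstar..M} \<Longrightarrow> 0 \<le> a m n"
    and a_o1: "\<And>m. m \<in> {mstar..M} \<Longrightarrow> (\<lambda>n. a m n) \<longlonglongrightarrow> 0"
    and over_fit: "\<And>m. m \<in> {mstar..M} \<Longrightarrow>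
          bigO_P \<Omega> (\<lambda>n \<omega>. frob_sq n (\<lambda>i j. Phat m n \<omega> i j - P n i j) / (real n)\<^sup>2) (\<lambda>n. a m n)"
    and b_pos: "\<And>m n. m \<in> {1..<mstar} \<Longrightarrow> 0 < b m n"
    and under_fit: "\<And>m. m \<in> {1..<mstar} \<Longrightarrow>
          bigOmega_P \<Omega> (\<lambda>n \<omega>. (1 / real (card (eval_set n \<omega>))) *
              (\<Sum>(i,j)\<in>eval_set n \<omega>. (Phat m n \<omega> i j - P n i j)\<^sup>2)) (\<lambda>n. b m n)"
    and rate1: "1 < mstar \<Longrightarrow> filterlim (\<lambda>n. (1 - w n) * b_min n / lower n) at_top sequentially"
    and rate2: "1 < mstar \<Longrightarrow> filterlim (\<lambda>n. (real n)\<^sup>2 * (1 - w n) * b_min n) at_top sequentially"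
    and lam_lower: "ll_P \<Omega> (\<lambda>n \<omega>. lower n) (\<lambda>n \<omega>. (1 - w n) * lam n \<omega>)"
    and lam_upper: "1 < mstar \<Longrightarrow> ll_P \<Omega> (\<lambda>n \<omega>. (1 - w n) * lam n \<omega>) (\<lambda>n \<omega>. (1 - w n) * b_min n)"
  shows "(\<lambda>n. measure_pmf.prob (\<Omega> n)
            {\<omega>. argmin_set M (\<lambda>m. cv_loss n (Phat m n) (d m) (lam n \<omega>) \<omega>) = {mstar}})
         \<longlonglongrightarrow> 1"
proof -
  interpret cv_selection M mstar P w Phat d lam a b \<Omega> b_min lower
    using assms by unfold_locales (simp_all add: \<Omega>_def b_min_def lower_def)
  show ?thesis
    using prob_selects_mstar_tendsto_1 by (simp add: selects_mstar_def)
qed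


end
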